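(* Let $X=(X(t))_{t\ge0}$ be a centered Gaussian process, self-similar of order $\beta\in(0,1)$, satisfying (H.1) with parameters $\alpha,\lambda,\psi$. Let $\eta>0$ and $M_1,M_2>0$. Then there exist a continuous function $u_2$ and a constant $C>0$ (independent of $s,t$) such that for all $s,t>\eta$ with $\eta\le|s-t|\le M_1(s\wedge t)+M_2$, $$\mathbb{E}\big[(X(t+1)-X(t))(X(s+1)-X(s))\big]=\lambda(s\wedge t)^{2\beta-\alpha}\big(2a_\alpha(s-t)+u_2(s,t)\big),$$ where $|u_2(s,t)|\le C\big((s\wedge t)^{-1}|s-t|^{\alpha-1}+(s\wedge t)^{\alpha-2}\big)$ if $|s-t|\ge1$, and $|u_2(s,t)|\le C\big((s\wedge t)^{\alpha-1}\mathbf{1}_{\{\alpha<1\}}+(s\wedge t)^{\alpha-2}\mathbf{1}_{\{\alpha\ge1\}}\big)$ if $|s-t|<1$.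
   Context: Self-similar of order $\beta$: $(X(ct))_{t\ge0}\overset{law}{=}(c^\beta X(t))_{t\ge0}$ for all $c>0$. $\phi(x)=\mathbb{E}[X(1)X(x)]$, $x\ge1$, so $\mathbb{E}[X(s)X(t)]=s^{2\beta}\phi(t/s)$ for $0<s\le t$. (H.1): there is $\alpha\in(0,2\beta]$ with $\phi(x)=-\lambda(x-1)^\alpha+\psi(x)$, $\lambda>0$, $\psi$ twice differentiable on an open set containing $[1,\infty)$, and $C\ge0$ with, for $x\in(1,\infty)$: $|\psi'(x)|\le Cx^{\alpha-1}$, $|\psi''(x)|\le Cx^{-1}(x-1)^{\alpha-1}$, and $\psi'(1)=\beta\psi(1)$ when $\alpha\ge1$. For $\alpha>0$, $a_\alpha(h)=\frac12(|h-1|^\alpha+|h+1|^\alpha-2|h|^\alpha)$. *)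

theory Defs
  imports "HOL-Probability.Probability"
begin

definition a_alpha :: "real \<Rightarrow> real \<Rightarrow> real" where
  "a_alpha \<alpha> h = (\<bar>h - 1\<bar> powr \<alpha> + \<bar>h + 1\<bar> powr \<alpha> - 2 * \<bar>h\<bar> powr \<alpha>) / 2"

definition gaussian_rv :: "'a measure \<Rightarrow> ('a \<Rightarrow> real) \<Rightarrow> bool" where
  "gaussian_rv M Y \<longleftrightarrow>
     (\<exists>\<mu> \<sigma>. \<sigma> > 0 \<and> distributed M lborel Y (normal_density \<mu> \<sigma>)) \<or>
     (\<exists>c. AE \<omega> in M. Y \<omega> = c)"

definition gaussian_process :: "'a measure \<Rightarrow> (real \<Rightarrow> 'a \<Rightarrow> real) \<Rightarrow> bool" where
  "gaussian_process M X \<longleftrightarrow>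
     (\<forall>t\<ge>0. X t \<in> borel_measurable M) \<and>
     (\<forall>I c. finite I \<longrightarrow> I \<subseteq> {0..} \<longrightarrow> gaussian_rv M (\<lambda>\<omega>. \<Sum>t\<in>I. c t * X t \<omega>))"

definition centered :: "'a measure \<Rightarrow> (real \<Rightarrow> 'a \<Rightarrow> real) \<Rightarrow> bool" where
  "centered M X \<longleftrightarrow> (\<forall>t\<ge>0. integral\<^sup>L M (X t) = 0)"

definition self_similar :: "'a measure \<Rightarrow> (real \<Rightarrow> 'a \<Rightarrow> real) \<Rightarrow> real \<Rightarrow> bool" where
  "self_similar M X \<beta> \<longleftrightarrow>
     (\<forall>c>0. \<forall>I. finite I \<longrightarrow> I \<subseteq> {0..} \<longrightarrow>
        distr M (Pi\<^sub>M I (\<lambda>_. borel)) (\<lambda>\<omega>. \<lambda>t\<in>I. X (c * t) \<omega>) =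
        distr M (Pi\<^sub>M I (\<lambda>_. borel)) (\<lambda>\<omega>. \<lambda>t\<in>I. c powr \<beta> * X t \<omega>))"

definition cov_phi :: "'a measure \<Rightarrow> (real \<Rightarrow> 'a \<Rightarrow> real) \<Rightarrow> real \<Rightarrow> real" where
  "cov_phi M X x = integral\<^sup>L M (\<lambda>\<omega>. X 1 \<omega> * X x \<omega>)"

definition H1 :: "'a measure \<Rightarrow> (real \<Rightarrow> 'a \<Rightarrow> real) \<Rightarrow> real \<Rightarrow> real \<Rightarrow> real \<Rightarrow> (real \<Rightarrow> real) \<Rightarrow> bool" where
  "H1 M X \<beta> \<alpha> lam \<psi> \<longleftrightarrow>
     0 < \<alpha> \<and> \<alpha> \<le> 2 * \<beta> \<and> lam > 0 \<and>
     (\<forall>x\<ge>1. cov_phi M X x = - lam * (x - 1) powr \<alpha> + \<psi> x) \<and>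
     (\<exists>U. open U \<and> {1..} \<subseteq> U \<and>
        (\<forall>x\<in>U. \<psi> differentiable (at x) \<and> deriv \<psi> differentiable (at x))) \<and>
     (\<exists>C\<ge>0. \<forall>x>1. \<bar>deriv \<psi> x\<bar> \<le> C * x powr (\<alpha> - 1) \<and>
                   \<bar>deriv (deriv \<psi>) x\<bar> \<le> C * x powr (-1) * (x - 1) powr (\<alpha> - 1)) \<and>
     (\<alpha> \<ge> 1 \<longrightarrow> deriv \<psi> 1 = \<beta> * \<psi> 1)"

end

theory Submission
  imports Defs
begin

text \<open>By self-similarity \<open>E[X(a) X(b)] = a^(2\<beta>) \<phi>(b/a)\<close> for \<open>a \<le> b\<close>, so the covariance of the
  increments is a second difference of this kernel with unit steps. Splitting
  \<open>\<phi>(x) = -\<lambda> (x-1)^\<alpha> + \<psi>(x)\<close> separates a singular part, whose second difference at scale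
  \<open>s = min s t\<close> is \<open>2 \<lambda> s^(2\<beta>-\<alpha>) a\<^sub>\<alpha>(s - t)\<close> up to the factor \<open>((s+1)/s)^(2\<beta>-\<alpha>) = 1 + O(1/s)\<close>,
  from a regular part driven by \<psi>. Far from the diagonal the regular part is a mixed second
  difference, bounded by applying the mean value theorem twice together with the growth bounds on
  \<open>\<psi>'\<close> and \<open>\<psi>''\<close>. Near the diagonal all four ratios in the kernel are \<open>1 + O(1/s)\<close>, and \<psi> is
  replaced by its Taylor polynomial at 1: of order 0 if \<open>\<alpha> < 1\<close>, of order 1 if \<open>\<alpha> \<ge> 1\<close>. In
  the latter case \<open>\<psi>'(1) = \<beta> \<psi>(1)\<close> makes the linear part a multiple of the kernel of
  \<open>1 + \<beta> (x - 1)\<close>, whose second difference is only \<open>O(s^(2\<beta>-2))\<close>.\<close>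

section \<open>Elementary estimates for powers\<close>

lemma abs_powr_diff_le:
  fixes x y q :: real
  assumes "0 < y" "y \<le> x"
  shows "\<bar>x powr q - y powr q\<bar> \<le> \<bar>q\<bar> * (x powr (q-1) + y powr (q-1)) * (x - y)"
proof (cases "y = x")
  case True then show ?thesis by simp
next
  case False
  then have lt: "y < x" using assms by simp
  have "\<And>z. y \<le> z \<Longrightarrow> z \<le> x \<Longrightarrow> ((\<lambda>z. z powr q) has_real_derivative q * z powr (q-1)) (at z)"
    using assms by (intro has_real_derivative_powr) auto
  from MVT2[OF lt this] obtain z
    where z: "y < z" "z < x" "x powr q - y powr q = (x - y) * (q * z powr (q-1))"
    by blast
  have "z powr (q-1) \<le> x powr (q-1) + y powr (q-1)"
  proof (cases "q - 1 \<ge> 0")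
    case True
    then have "z powr (q-1) \<le> x powr (q-1)" using z assms by (intro powr_mono2) auto
    then show ?thesis by (smt (verit) powr_ge_zero)
  next
    case False
    then have "z powr (q-1) \<le> y powr (q-1)" using z assms by (intro powr_mono2') auto
    then show ?thesis by (smt (verit) powr_ge_zero)
  qed
  then have "\<bar>q\<bar> * z powr (q-1) * (x - y) \<le> \<bar>q\<bar> * (x powr (q-1) + y powr (q-1)) * (x - y)"
    using lt by (intro mult_right_mono mult_left_mono) auto
  moreover have "\<bar>x powr q - y powr q\<bar> = \<bar>q\<bar> * z powr (q-1) * (x - y)"
    using z lt by (simp add: abs_mult)
  ultimately show ?thesis by simp
qed

lemma powr_le_of_comparable:
  fixes s z c r :: real
  assumes "0 < s" "s \<le> z" "z \<le> c * s" "1 \<le> c" "\<bar>r\<bar> \<le> 2"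
  shows "z powr r \<le> c^2 * s powr r"
proof (cases "r \<ge> 0")
  case True
  have "z powr r \<le> (c * s) powr r" using assms True by (intro powr_mono2) auto
  also have "\<dots> = c powr r * s powr r" using assms by (simp add: powr_mult)
  also have "c powr r \<le> c powr 2" using assms by (intro powr_mono) auto
  then have "c powr r * s powr r \<le> c^2 * s powr r" using assms by (intro mult_right_mono) auto
  finally show ?thesis .
next
  case False
  have "z powr r \<le> s powr r" using assms False by (intro powr_mono2') auto
  also have "\<dots> \<le> c^2 * s powr r"
    using assms powr_ge_zero[of s r] by (metis mult_1 mult_right_mono one_le_power)
  finally show ?thesis .
qed

lemma add_two_le_mult:
  fixes \<eta> s :: real
  assumes "0 < \<eta>" "\<eta> < s"
  shows "s + 2 \<le> (1 + 2/\<eta>) * s"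
proof -
  have "2 \<le> 2 * s / \<eta>" using assms by (simp add: field_simps)
  then show ?thesis by (simp add: algebra_simps)
qed

lemma powr_le_of_near:
  fixes \<eta> s z r :: real
  assumes "0 < \<eta>" "\<eta> < s" "s \<le> z" "z \<le> s + 2" "\<bar>r\<bar> \<le> 2"
  shows "z powr r \<le> (1 + 2/\<eta>)^2 * s powr r"
  using powr_le_of_comparable[of s z "1 + 2/\<eta>" r] add_two_le_mult[of \<eta> s] assms by auto

lemma abs_powr_diff_le_near:
  fixes \<eta> s x y q :: real
  assumes "0 < \<eta>" "\<eta> < s" "s \<le> y" "y \<le> x" "x \<le> s + 2" "-1 \<le> q" "q \<le> 3"
  shows "\<bar>x powr q - y powr q\<bar> \<le> 2 * \<bar>q\<bar> * (1 + 2/\<eta>)^2 * s powr (q-1) * (x - y)"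
proof -
  have "\<bar>x powr q - y powr q\<bar> \<le> \<bar>q\<bar> * (x powr (q-1) + y powr (q-1)) * (x - y)"
    using abs_powr_diff_le[of y x q] assms by auto
  also have "\<dots> \<le> \<bar>q\<bar> * ((1 + 2/\<eta>)^2 * s powr (q-1) + (1 + 2/\<eta>)^2 * s powr (q-1)) * (x - y)"
    using powr_le_of_near[of \<eta> s x "q-1"] powr_le_of_near[of \<eta> s y "q-1"] assms
    by (intro mult_right_mono mult_left_mono add_mono) auto
  finally show ?thesis by (simp add: algebra_simps)
qed

lemma powr_sub_one_bounds:
  fixes H \<alpha> :: real
  assumes "1 \<le> H" "0 < \<alpha>" "\<alpha> \<le> 2"
  shows "0 \<le> H powr \<alpha> - (H-1) powr \<alpha>" "H powr \<alpha> - (H-1) powr \<alpha> \<le> 2 * H powr (\<alpha> - 1)"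
proof -
  define y where "y = 1 / H"
  have y: "0 < y" "y \<le> 1" using assms by (auto simp: y_def)
  have "H - 1 = H * (1 - y)" using assms by (simp add: y_def field_simps)
  then have e: "(H-1) powr \<alpha> = H powr \<alpha> * (1-y) powr \<alpha>"
    using assms y by (auto intro!: powr_mult)
  have le1: "(1-y) powr \<alpha> \<le> 1" using y assms by (intro powr_le1) auto
  have "(1-y) powr 2 \<le> (1-y) powr \<alpha>" using y assms by (intro powr_mono') auto
  then have ge: "1 - 2*y + y^2 \<le> (1-y) powr \<alpha>"
    using y by (simp add: power2_eq_square algebra_simps)
  have Hp: "0 \<le> H powr \<alpha>" by simp
  show "0 \<le> H powr \<alpha> - (H-1) powr \<alpha>" unfolding e using le1 Hp
    by (simp add: mult_left_le)
  have "H powr \<alpha> - (H-1) powr \<alpha> = H powr \<alpha> * (1 - (1-y) powr \<alpha>)"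
    unfolding e by (simp add: algebra_simps)
  also have "\<dots> \<le> H powr \<alpha> * (2 * y)"
    using ge y Hp by (intro mult_left_mono) (smt (verit) zero_le_power2)+
  also have "\<dots> = 2 * H powr (\<alpha> - 1)"
    using assms by (simp add: y_def powr_diff)
  finally show "H powr \<alpha> - (H-1) powr \<alpha> \<le> 2 * H powr (\<alpha> - 1)" .
qed

lemma powr_ratio_sub_one_bounds:
  fixes \<eta> s g x :: real
  assumes "0 < \<eta>" "\<eta> < s" "0 \<le> g" "g \<le> 2" "s \<le> x" "x \<le> s + 1"
  shows "0 \<le> x powr g / s powr g - 1" "x powr g / s powr g - 1 \<le> (2 + 1/\<eta>) / s"
proof -
  have s0: "0 < s" using assms by simp
  have q: "x powr g / s powr g = (x/s) powr g" using s0 assms by (simp add: powr_divide)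
  have r1: "1 \<le> x / s" using assms s0 by simp
  have r2: "x / s \<le> 1 + 1/s" using assms s0 by (simp add: field_simps)
  have "1 \<le> (x/s) powr g" using r1 assms by (intro ge_one_powr_ge_zero) auto
  then show "0 \<le> x powr g / s powr g - 1" using q by simp
  have "(x/s) powr g \<le> (x/s) powr 2" using r1 assms by (intro powr_mono) auto
  also have "\<dots> \<le> (1 + 1/s)^2" using r1 r2 by (simp add: power_mono)
  also have "\<dots> = 1 + 2/s + (1/s) * (1/s)" by (simp add: power2_eq_square algebra_simps)
  also have "(1/s) * (1/s) \<le> (1/\<eta>) * (1/s)"
    using assms s0 by (intro mult_right_mono) (auto simp: field_simps)
  finally have "(x/s) powr g \<le> 1 + (2 + 1/\<eta>) / s" by (simp add: add_divide_distrib)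
  then show "x powr g / s powr g - 1 \<le> (2 + 1/\<eta>) / s" using q by simp
qed

lemma abs_diff_le_of_deriv_majorant:
  fixes f g f' g' :: "real \<Rightarrow> real" and a b :: real
  assumes "a \<le> b"
    and df: "\<And>x. a \<le> x \<Longrightarrow> x \<le> b \<Longrightarrow> (f has_real_derivative f' x) (at x)"
    and dg: "\<And>x. a \<le> x \<Longrightarrow> x \<le> b \<Longrightarrow> (g has_real_derivative g' x) (at x)"
    and bd: "\<And>x. a < x \<Longrightarrow> x < b \<Longrightarrow> \<bar>f' x\<bar> \<le> g' x"
  shows "\<bar>f b - f a\<bar> \<le> g b - g a"
proof (cases "a = b")
  case True then show ?thesis by simp
next
  case False
  then have lt: "a < b" using assms by simp
  have "\<And>x. a \<le> x \<Longrightarrow> x \<le> b \<Longrightarrow> ((\<lambda>x. f x - g x) has_real_derivative f' x - g' x) (at x)"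
    using df dg by (intro derivative_intros) auto
  from MVT2[OF lt this] obtain z
    where z: "a < z" "z < b" "(f b - g b) - (f a - g a) = (b - a) * (f' z - g' z)" by blast
  have "\<And>x. a \<le> x \<Longrightarrow> x \<le> b \<Longrightarrow> ((\<lambda>x. f x + g x) has_real_derivative f' x + g' x) (at x)"
    using df dg by (intro derivative_intros) auto
  from MVT2[OF lt this] obtain w
    where w: "a < w" "w < b" "(f b + g b) - (f a + g a) = (b - a) * (f' w + g' w)" by blast
  have "(b - a) * (f' z - g' z) \<le> 0"
    using bd[of z] z lt by (intro mult_nonneg_nonpos) auto
  moreover have "(b - a) * (f' w + g' w) \<ge> 0" using bd[of w] w lt by simp
  ultimately show ?thesis using z(3) w(3) by linarith
qed

lemma a_alpha_minus: "a_alpha \<alpha> (- h) = a_alpha \<alpha> h"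
proof -
  have "\<bar>- h - 1\<bar> = \<bar>h + 1\<bar>" "\<bar>- h + 1\<bar> = \<bar>h - 1\<bar>" by linarith+
  then show ?thesis unfolding a_alpha_def by simp
qed

lemma a_alpha_far:
  assumes "1 \<le> h"
  shows "2 * a_alpha \<alpha> h = (h+1) powr \<alpha> + (h-1) powr \<alpha> - 2 * h powr \<alpha>"
  using assms by (simp add: a_alpha_def)

lemma a_alpha_near:
  assumes "0 \<le> h" "h \<le> 1"
  shows "2 * a_alpha \<alpha> h = (h+1) powr \<alpha> + (1-h) powr \<alpha> - 2 * h powr \<alpha>"
proof -
  have "\<bar>h - 1\<bar> = 1 - h" using assms by simp
  then show ?thesis using assms by (simp add: a_alpha_def)
qed

section \<open>Self-similar covariance kernels\<close>

definition ss_kernel :: "(real \<Rightarrow> real) \<Rightarrow> real \<Rightarrow> real \<Rightarrow> real \<Rightarrow> real" where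
  "ss_kernel \<phi> \<beta> a b = (min a b) powr (2*\<beta>) * \<phi> (max a b / min a b)"

definition power_kernel :: "real \<Rightarrow> real \<Rightarrow> real \<Rightarrow> real \<Rightarrow> real" where
  "power_kernel \<gamma> \<alpha> a b = (min a b) powr \<gamma> * \<bar>a - b\<bar> powr \<alpha>"

text \<open>For the covariance kernel \<open>K\<close> of a process \<open>X\<close>, \<open>second_diff K s t\<close> is the covariance of
  the increments \<open>X (t + 1) - X t\<close> and \<open>X (s + 1) - X s\<close>.\<close>
definition second_diff :: "(real \<Rightarrow> real \<Rightarrow> real) \<Rightarrow> real \<Rightarrow> real \<Rightarrow> real" where
  "second_diff K s t = K (t+1) (s+1) - K (t+1) s - K t (s+1) + K t s"

lemma ss_kernel_commute: "ss_kernel \<phi> \<beta> a b = ss_kernel \<phi> \<beta> b a"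
  unfolding ss_kernel_def by (simp add: min.commute max.commute)

lemma ss_kernel_le: "a \<le> b \<Longrightarrow> ss_kernel \<phi> \<beta> a b = a powr (2*\<beta>) * \<phi> (b / a)"
  by (simp add: ss_kernel_def)

lemma ss_kernel_ge: "b \<le> a \<Longrightarrow> ss_kernel \<phi> \<beta> a b = b powr (2*\<beta>) * \<phi> (a / b)"
  by (simp add: ss_kernel_def)

lemma ss_kernel_split:
  fixes a b lam \<alpha> \<beta> :: real
  assumes "0 < a" "0 < b" and \<phi>: "\<And>x. 1 \<le> x \<Longrightarrow> \<phi> x = - lam * (x - 1) powr \<alpha> + \<psi> x"
  shows "ss_kernel \<phi> \<beta> a b = - lam * power_kernel (2*\<beta> - \<alpha>) \<alpha> a b + ss_kernel \<psi> \<beta> a b"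
proof -
  define m where "m = min a b"
  define M where "M = max a b"
  have m: "0 < m" "m \<le> M" "\<bar>a - b\<bar> = M - m" using assms by (auto simp: m_def M_def)
  have "(M/m - 1) powr \<alpha> = (M - m) powr \<alpha> / m powr \<alpha>"
  proof -
    have "M/m - 1 = (M - m)/m" using m by (simp add: field_simps)
    then show ?thesis using m by (simp add: powr_divide)
  qed
  moreover have "\<phi> (M/m) = - lam * (M/m - 1) powr \<alpha> + \<psi> (M/m)" using m by (intro \<phi>) simp
  ultimately have "m powr (2*\<beta>) * \<phi> (M/m)
      = m powr (2*\<beta>) * (- lam * ((M - m) powr \<alpha> / m powr \<alpha>) + \<psi> (M/m))"
    by simp
  also have "\<dots> = - lam * (m powr (2*\<beta> - \<alpha>) * (M - m) powr \<alpha>) + m powr (2*\<beta>) * \<psi> (M/m)"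
    by (simp add: powr_diff algebra_simps)
  finally have "m powr (2*\<beta>) * \<phi> (M/m)
      = - lam * (m powr (2*\<beta> - \<alpha>) * (M - m) powr \<alpha>) + m powr (2*\<beta>) * \<psi> (M/m)" .
  then show ?thesis
    unfolding ss_kernel_def power_kernel_def m_def[symmetric] M_def[symmetric] m(3) .
qed

lemma second_diff_commute:
  assumes "\<And>a b. K a b = K b a"
  shows "second_diff K s t = second_diff K t s"
  unfolding second_diff_def by (simp add: assms[of "t+1"] assms[of t])

lemma second_diff_ss_kernel_split:
  fixes s t lam \<alpha> \<beta> :: real
  assumes "0 < s" "0 < t" and "\<And>x. 1 \<le> x \<Longrightarrow> \<phi> x = - lam * (x - 1) powr \<alpha> + \<psi> x"
  shows "second_diff (ss_kernel \<phi> \<beta>) s t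
    = - lam * second_diff (power_kernel (2*\<beta> - \<alpha>) \<alpha>) s t + second_diff (ss_kernel \<psi> \<beta>) s t"
  unfolding second_diff_def using assms(1,2)
  by (simp add: ss_kernel_split[OF _ _ assms(3)] algebra_simps)

lemma second_diff_ss_kernel_add:
  "second_diff (ss_kernel (\<lambda>x. c * f x + g x) \<beta>) s t
    = c * second_diff (ss_kernel f \<beta>) s t + second_diff (ss_kernel g \<beta>) s t"
  unfolding second_diff_def ss_kernel_def by (simp add: algebra_simps)

lemma second_diff_power_kernel_far:
  fixes \<eta> s h \<gamma> \<alpha> :: real
  assumes "0 < \<eta>" "\<eta> < s" "1 \<le> h" "0 \<le> \<gamma>" "\<gamma> \<le> 2" "0 < \<alpha>" "\<alpha> \<le> 2"
  shows "\<bar>second_diff (power_kernel \<gamma> \<alpha>) s (s + h) / s powr \<gamma> + 2 * a_alpha \<alpha> h\<bar>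
    \<le> 2 * (2 + 1/\<eta>) * (s powr (-1) * h powr (\<alpha> - 1))"
proof -
  have s0: "0 < s" using assms by simp
  define \<rho> where "\<rho> = (s+1) powr \<gamma> / s powr \<gamma>"
  have D: "second_diff (power_kernel \<gamma> \<alpha>) s (s + h)
      = (s+1) powr \<gamma> * h powr \<alpha> - s powr \<gamma> * (h+1) powr \<alpha> - (s+1) powr \<gamma> * (h-1) powr \<alpha>
        + s powr \<gamma> * h powr \<alpha>"
    using assms by (simp add: second_diff_def power_kernel_def)
  have e: "second_diff (power_kernel \<gamma> \<alpha>) s (s + h) / s powr \<gamma> + 2 * a_alpha \<alpha> h
      = (\<rho> - 1) * (h powr \<alpha> - (h-1) powr \<alpha>)"
    unfolding D a_alpha_far[OF assms(3)] \<rho>_def using s0 by (simp add: field_simps)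
  have r: "0 \<le> \<rho> - 1" "\<rho> - 1 \<le> (2 + 1/\<eta>) / s"
    unfolding \<rho>_def using powr_ratio_sub_one_bounds[of \<eta> s \<gamma> "s+1"] assms by auto
  have p: "0 \<le> h powr \<alpha> - (h-1) powr \<alpha>" "h powr \<alpha> - (h-1) powr \<alpha> \<le> 2 * h powr (\<alpha> - 1)"
    using powr_sub_one_bounds[of h \<alpha>] assms by auto
  have "\<bar>(\<rho> - 1) * (h powr \<alpha> - (h-1) powr \<alpha>)\<bar> = (\<rho> - 1) * (h powr \<alpha> - (h-1) powr \<alpha>)"
    using r p by (simp add: abs_mult)
  also have "\<dots> \<le> ((2 + 1/\<eta>) / s) * (2 * h powr (\<alpha> - 1))"
    using r p by (intro mult_mono) auto
  also have "\<dots> = 2 * (2 + 1/\<eta>) * (s powr (-1) * h powr (\<alpha> - 1))"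
    using s0 by (simp add: powr_minus field_simps)
  finally show ?thesis unfolding e .
qed

lemma second_diff_power_kernel_near:
  fixes \<eta> s h \<gamma> \<alpha> :: real
  assumes "0 < \<eta>" "\<eta> < s" "0 \<le> h" "h \<le> 1" "0 \<le> \<gamma>" "\<gamma> \<le> 2" "0 < \<alpha>"
  shows "\<bar>second_diff (power_kernel \<gamma> \<alpha>) s (s + h) / s powr \<gamma> + 2 * a_alpha \<alpha> h\<bar>
    \<le> 2 * (2 + 1/\<eta>) / s"
proof -
  have s0: "0 < s" using assms by simp
  define \<rho> where "\<rho> = (s+1) powr \<gamma> / s powr \<gamma>"
  define \<tau> where "\<tau> = (s+h) powr \<gamma> / s powr \<gamma>"
  have D: "second_diff (power_kernel \<gamma> \<alpha>) s (s + h)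
      = (s+1) powr \<gamma> * h powr \<alpha> - s powr \<gamma> * (h+1) powr \<alpha> - (s+h) powr \<gamma> * (1-h) powr \<alpha>
        + s powr \<gamma> * h powr \<alpha>"
    using assms by (simp add: second_diff_def power_kernel_def min_def)
  have e: "second_diff (power_kernel \<gamma> \<alpha>) s (s + h) / s powr \<gamma> + 2 * a_alpha \<alpha> h
      = (\<rho> - 1) * h powr \<alpha> - (\<tau> - 1) * (1-h) powr \<alpha>"
    unfolding D a_alpha_near[OF assms(3,4)] \<rho>_def \<tau>_def using s0 by (simp add: field_simps)
  have r: "0 \<le> \<rho> - 1" "\<rho> - 1 \<le> (2 + 1/\<eta>) / s"
    unfolding \<rho>_def using powr_ratio_sub_one_bounds[of \<eta> s \<gamma> "s+1"] assms by auto
  have t: "0 \<le> \<tau> - 1" "\<tau> - 1 \<le> (2 + 1/\<eta>) / s"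
    unfolding \<tau>_def using powr_ratio_sub_one_bounds[of \<eta> s \<gamma> "s+h"] assms by auto
  have "h powr \<alpha> \<le> 1" "(1-h) powr \<alpha> \<le> 1" using assms by (auto intro!: powr_le1)
  then have "(\<rho> - 1) * h powr \<alpha> \<le> (2 + 1/\<eta>) / s" "(\<tau> - 1) * (1-h) powr \<alpha> \<le> (2 + 1/\<eta>) / s"
    using r t by (auto intro: order_trans[OF mult_right_le_one_le])
  moreover have "0 \<le> (\<rho> - 1) * h powr \<alpha>" "0 \<le> (\<tau> - 1) * (1-h) powr \<alpha>" using r t by auto
  ultimately show ?thesis unfolding e by linarith
qed

section \<open>The regular part \<psi>\<close>

locale regular_part =
  fixes \<psi> d\<psi> dd\<psi> :: "real \<Rightarrow> real" and \<alpha> \<beta> C :: real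
  assumes exponents: "0 < \<alpha>" "\<alpha> \<le> 2*\<beta>" "0 < \<beta>" "\<beta> < 1"
    and C_nonneg: "0 \<le> C"
    and has_deriv_psi: "\<And>x. 1 \<le> x \<Longrightarrow> (\<psi> has_real_derivative d\<psi> x) (at x)"
    and has_deriv_dpsi: "\<And>x. 1 \<le> x \<Longrightarrow> (d\<psi> has_real_derivative dd\<psi> x) (at x)"
    and dpsi_bound: "\<And>x. 1 < x \<Longrightarrow> \<bar>d\<psi> x\<bar> \<le> C * x powr (\<alpha> - 1)"
    and ddpsi_bound: "\<And>x. 1 < x \<Longrightarrow> \<bar>dd\<psi> x\<bar> \<le> C * x powr (-1) * (x - 1) powr (\<alpha> - 1)"
    and dpsi_one: "1 \<le> \<alpha> \<Longrightarrow> d\<psi> 1 = \<beta> * \<psi> 1"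
begin

lemma psi_diff_le:
  assumes "\<alpha> < 1" "1 \<le> x"
  shows "\<bar>\<psi> x - \<psi> 1\<bar> \<le> C * (x - 1)"
proof -
  have "\<bar>\<psi> x - \<psi> 1\<bar> \<le> C * x - C * 1"
  proof (rule abs_diff_le_of_deriv_majorant[of 1 x \<psi> d\<psi> "\<lambda>x. C * x" "\<lambda>_. C"])
    show "((\<lambda>x. C * x) has_real_derivative C) (at y)" for y
      by (auto intro!: derivative_eq_intros)
    show "\<bar>d\<psi> y\<bar> \<le> C" if "1 < y" "y < x" for y
    proof -
      have "y powr (\<alpha> - 1) \<le> y powr 0" using that assms by (intro powr_mono) auto
      then have "y powr (\<alpha> - 1) \<le> 1" using that by simp
      then have "C * y powr (\<alpha> - 1) \<le> C" using C_nonneg by (rule mult_left_le)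
      then show ?thesis using dpsi_bound[of y] that by linarith
    qed
    show "(\<psi> has_real_derivative d\<psi> y) (at y)" if "1 \<le> y" for y
      using has_deriv_psi that by simp
  qed (use assms in simp)
  then show ?thesis by (simp add: algebra_simps)
qed

lemma ddpsi_le:
  assumes "1 \<le> \<alpha>" "1 < x"
  shows "\<bar>dd\<psi> x\<bar> \<le> C"
proof -
  have "(x - 1) powr (\<alpha> - 1) \<le> x powr (\<alpha> - 1)" using assms by (intro powr_mono2) auto
  then have "x powr (-1) * (x - 1) powr (\<alpha> - 1) \<le> x powr (-1) * x powr (\<alpha> - 1)"
    by (intro mult_left_mono) auto
  also have "\<dots> = x powr (\<alpha> - 2)" using powr_add[of x "-1" "\<alpha> - 1"] by simp
  also have "\<dots> \<le> x powr 0" using assms exponents by (intro powr_mono) auto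
  also have "\<dots> = 1" using assms by simp
  finally have "C * (x powr (-1) * (x - 1) powr (\<alpha> - 1)) \<le> C"
    using C_nonneg by (rule mult_left_le)
  then show ?thesis using ddpsi_bound[of x] assms by (simp add: mult.assoc)
qed

lemma dpsi_diff_le:
  assumes "1 \<le> \<alpha>" "1 \<le> x"
  shows "\<bar>d\<psi> x - d\<psi> 1\<bar> \<le> C * (x - 1)"
proof -
  have "\<bar>d\<psi> x - d\<psi> 1\<bar> \<le> C * x - C * 1"
  proof (rule abs_diff_le_of_deriv_majorant[of 1 x d\<psi> dd\<psi> "\<lambda>x. C * x" "\<lambda>_. C"])
    show "((\<lambda>x. C * x) has_real_derivative C) (at y)" for y
      by (auto intro!: derivative_eq_intros)
    show "(d\<psi> has_real_derivative dd\<psi> y) (at y)" if "1 \<le> y" for y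
      using has_deriv_dpsi that by simp
    show "\<bar>dd\<psi> y\<bar> \<le> C" if "1 < y" "y < x" for y
      using ddpsi_le[OF assms(1)] that by simp
  qed (use assms in simp)
  then show ?thesis by (simp add: algebra_simps)
qed

lemma psi_taylor_le:
  assumes "1 \<le> \<alpha>" "1 \<le> x"
  shows "\<bar>\<psi> x - \<psi> 1 - d\<psi> 1 * (x - 1)\<bar> \<le> C * (x - 1)^2"
proof -
  have "\<bar>(\<psi> x - \<psi> 1 - d\<psi> 1 * (x - 1)) - (\<psi> 1 - \<psi> 1 - d\<psi> 1 * (1 - 1))\<bar>
        \<le> C * (x - 1)^2 - C * (1 - 1)^2"
  proof (rule abs_diff_le_of_deriv_majorant[of 1 x "\<lambda>x. \<psi> x - \<psi> 1 - d\<psi> 1 * (x - 1)"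
        "\<lambda>x. d\<psi> x - d\<psi> 1" "\<lambda>x. C * (x - 1)^2" "\<lambda>x. 2 * C * (x - 1)"])
    show "((\<lambda>x. \<psi> x - \<psi> 1 - d\<psi> 1 * (x - 1)) has_real_derivative d\<psi> y - d\<psi> 1) (at y)"
      if "1 \<le> y" for y
      using has_deriv_psi[OF that] by (auto intro!: derivative_eq_intros)
    show "((\<lambda>x. C * (x - 1)^2) has_real_derivative 2 * C * (y - 1)) (at y)" for y
      by (auto intro!: derivative_eq_intros)
    show "\<bar>d\<psi> y - d\<psi> 1\<bar> \<le> 2 * C * (y - 1)" if "1 < y" "y < x" for y
    proof -
      have "0 \<le> C * (y - 1)" using C_nonneg that by simp
      then show ?thesis using dpsi_diff_le[OF assms(1), of y] that by linarith
    qed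
  qed (use assms in auto)
  then show ?thesis by simp
qed

end

lemma far_powr_sum_le:
  fixes s t \<zeta> c1 \<alpha> :: real
  assumes "0 < s" "s + 1 \<le> t" "t < \<zeta>" "\<zeta> \<le> c1 * s" "1 \<le> c1" "0 < \<alpha>" "\<alpha> \<le> 2"
  shows "\<zeta> powr (\<alpha> - 1) + 2/\<alpha> * (\<zeta> - s) powr (\<alpha> - 1)
    \<le> (1 + 2/\<alpha>) * c1 * ((t - s) powr (\<alpha> - 1) + s powr (\<alpha> - 1))"
proof -
  define X where "X = (t - s) powr (\<alpha> - 1) + s powr (\<alpha> - 1)"
  have "X \<le> c1 * X" using assms mult_right_mono[of 1 c1 X] by (simp add: X_def)
  have "\<zeta> powr (\<alpha> - 1) \<le> c1 * X \<and> (\<zeta> - s) powr (\<alpha> - 1) \<le> c1 * X"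
  proof (cases "\<alpha> < 1")
    case True
    have "\<zeta> powr (\<alpha> - 1) \<le> (t - s) powr (\<alpha> - 1)" "(\<zeta> - s) powr (\<alpha> - 1) \<le> (t - s) powr (\<alpha> - 1)"
      using True assms by (auto intro!: powr_mono2')
    moreover have "(t - s) powr (\<alpha> - 1) \<le> X" by (simp add: X_def)
    ultimately show ?thesis using \<open>X \<le> c1 * X\<close> by linarith
  next
    case False
    have "\<zeta> powr (\<alpha> - 1) \<le> (c1 * s) powr (\<alpha> - 1)" using False assms by (intro powr_mono2) auto
    also have "\<dots> = c1 powr (\<alpha> - 1) * s powr (\<alpha> - 1)" using assms by (simp add: powr_mult)
    also have "\<dots> \<le> c1 * s powr (\<alpha> - 1)"
    proof -
      have "c1 powr (\<alpha> - 1) \<le> c1 powr 1" using assms by (intro powr_mono) auto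
      then show ?thesis using assms by (simp add: mult_right_mono)
    qed
    also have "\<dots> \<le> c1 * X" using assms by (simp add: X_def)
    finally have "\<zeta> powr (\<alpha> - 1) \<le> c1 * X" .
    moreover have "(\<zeta> - s) powr (\<alpha> - 1) \<le> \<zeta> powr (\<alpha> - 1)"
      using False assms by (intro powr_mono2) auto
    ultimately show ?thesis by linarith
  qed
  then have "\<zeta> powr (\<alpha> - 1) + 2/\<alpha> * (\<zeta> - s) powr (\<alpha> - 1) \<le> c1 * X + 2/\<alpha> * (c1 * X)"
    using assms by (intro add_mono mult_left_mono) auto
  then show ?thesis by (simp add: X_def algebra_simps)
qed

context regular_part
begin

lemma second_diff_ss_kernel_far_mvt:
  assumes "0 < s" "s + 1 \<le> t"
  obtains \<zeta> where "t < \<zeta>" "\<zeta> < t + 1"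
    "second_diff (ss_kernel \<psi> \<beta>) s t
      = (s+1) powr (2*\<beta> - 1) * d\<psi> (\<zeta>/(s+1)) - s powr (2*\<beta> - 1) * d\<psi> (\<zeta>/s)"
proof -
  define H where "H b = (s+1) powr (2*\<beta>) * \<psi> (b/(s+1)) - s powr (2*\<beta>) * \<psi> (b/s)" for b
  have rescale: "((\<lambda>b. k powr (2*\<beta>) * \<psi> (b/k)) has_real_derivative k powr (2*\<beta> - 1) * d\<psi> (b/k)) (at b)"
    if "0 < k" "k \<le> b" for k b
  proof -
    have "((\<lambda>b. b/k) has_real_derivative 1/k) (at b)"
      using that by (auto intro!: derivative_eq_intros)
    from DERIV_chain2[OF has_deriv_psi this] have "((\<lambda>b. \<psi> (b/k)) has_real_derivative d\<psi> (b/k) * (1/k)) (at b)"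
      using that by simp
    then show ?thesis
      by (rule DERIV_cmult[THEN DERIV_cong]) (use that in \<open>simp add: powr_diff\<close>)
  qed
  define H' where "H' b = (s+1) powr (2*\<beta> - 1) * d\<psi> (b/(s+1)) - s powr (2*\<beta> - 1) * d\<psi> (b/s)" for b
  have "(H has_real_derivative H' b) (at b)" if "t \<le> b" for b
    unfolding H_def H'_def using assms that by (intro DERIV_diff rescale) auto
  then obtain \<zeta> where "t < \<zeta>" "\<zeta> < t + 1" "H (t+1) - H t = H' \<zeta>"
    using MVT2[of t "t+1" H H'] by auto
  moreover have "second_diff (ss_kernel \<psi> \<beta>) s t = H (t+1) - H t"
    using assms by (simp add: second_diff_def ss_kernel_ge H_def)
  ultimately show ?thesis using that by (simp add: H'_def)
qed

lemma has_deriv_rescaled_dpsi: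
  assumes "0 < a" "a \<le> \<zeta>"
  shows "((\<lambda>a. a powr (2*\<beta> - 1) * d\<psi> (\<zeta>/a)) has_real_derivative
      (2*\<beta> - 1) * a powr (2*\<beta> - 2) * d\<psi> (\<zeta>/a) + a powr (2*\<beta> - 1) * (dd\<psi> (\<zeta>/a) * (- \<zeta>/a^2))) (at a)"
proof -
  have "((\<lambda>a. \<zeta>/a) has_real_derivative - \<zeta>/a^2) (at a)"
    using assms by (auto intro!: derivative_eq_intros simp: power2_eq_square field_simps)
  from DERIV_chain2[OF has_deriv_dpsi this]
  have "((\<lambda>a. d\<psi> (\<zeta>/a)) has_real_derivative dd\<psi> (\<zeta>/a) * (- \<zeta>/a^2)) (at a)"
    using assms by simp
  from DERIV_mult[OF has_real_derivative_powr[OF assms(1), of "2*\<beta> - 1"] this]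
  show ?thesis by (simp add: algebra_simps)
qed

lemma abs_rescaled_dpsi_deriv_le:
  assumes "0 < a" "a < \<zeta>"
  shows "\<bar>(2*\<beta> - 1) * a powr (2*\<beta> - 2) * d\<psi> (\<zeta>/a) + a powr (2*\<beta> - 1) * (dd\<psi> (\<zeta>/a) * (- \<zeta>/a^2))\<bar>
    \<le> C * a powr (2*\<beta> - \<alpha> - 1) * (\<zeta> powr (\<alpha> - 1) + (\<zeta> - a) powr (\<alpha> - 1))"
proof -
  have x1: "1 < \<zeta>/a" using assms by simp
  have "\<bar>(2*\<beta> - 1) * a powr (2*\<beta> - 2) * d\<psi> (\<zeta>/a)\<bar> \<le> 1 * (a powr (2*\<beta> - 2) * (C * (\<zeta>/a) powr (\<alpha> - 1)))"
    unfolding abs_mult mult.assoc using exponents dpsi_bound[OF x1] by (intro mult_mono) auto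
  also have "\<dots> = C * a powr (2*\<beta> - \<alpha> - 1) * \<zeta> powr (\<alpha> - 1)"
  proof -
    have "2*\<beta> - \<alpha> - 1 = (2*\<beta> - 2) - (\<alpha> - 1)" by simp
    then have "a powr (2*\<beta> - \<alpha> - 1) = a powr (2*\<beta> - 2) / a powr (\<alpha> - 1)"
      by (simp only: powr_diff)
    then show ?thesis using assms by (simp add: powr_divide)
  qed
  finally have t1: "\<bar>(2*\<beta> - 1) * a powr (2*\<beta> - 2) * d\<psi> (\<zeta>/a)\<bar> \<le> C * a powr (2*\<beta> - \<alpha> - 1) * \<zeta> powr (\<alpha> - 1)" .
  have "\<bar>a powr (2*\<beta> - 1) * (dd\<psi> (\<zeta>/a) * (- \<zeta>/a^2))\<bar> = a powr (2*\<beta> - 1) * \<bar>dd\<psi> (\<zeta>/a)\<bar> * (\<zeta>/a^2)"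
    using assms by (simp add: abs_mult)
  also have "\<dots> \<le> a powr (2*\<beta> - 1) * (C * (\<zeta>/a) powr (-1) * (\<zeta>/a - 1) powr (\<alpha> - 1)) * (\<zeta>/a^2)"
    using ddpsi_bound[OF x1] assms by (intro mult_right_mono mult_left_mono) auto
  also have "\<dots> = C * a powr (2*\<beta> - \<alpha> - 1) * (\<zeta> - a) powr (\<alpha> - 1)"
  proof -
    have e1: "(\<zeta>/a) powr (-1) = a / \<zeta>" using assms by (simp add: powr_minus_divide)
    have e2: "\<zeta>/a - 1 = (\<zeta> - a) / a" using assms by (simp add: field_simps)
    have e3: "((\<zeta> - a) / a) powr (\<alpha> - 1) = (\<zeta> - a) powr (\<alpha> - 1) / a powr (\<alpha> - 1)"
      using assms by (simp add: powr_divide)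
    have "2*\<beta> - \<alpha> - 1 = ((2*\<beta> - 1) - (\<alpha> - 1)) - 1" by simp
    then have e4: "a powr (2*\<beta> - \<alpha> - 1) = a powr (2*\<beta> - 1) / a powr (\<alpha> - 1) / a"
      using assms by (simp only: powr_diff powr_one)
    show ?thesis unfolding e1 e2 e3 e4 using assms by (simp add: field_simps power2_eq_square)
  qed
  finally have t2: "\<bar>a powr (2*\<beta> - 1) * (dd\<psi> (\<zeta>/a) * (- \<zeta>/a^2))\<bar> \<le> C * a powr (2*\<beta> - \<alpha> - 1) * (\<zeta> - a) powr (\<alpha> - 1)" .
  from abs_triangle_ineq[THEN order_trans, OF add_mono[OF t1 t2]] show ?thesis
    by (simp add: algebra_simps)
qed

lemma rescaled_dpsi_diff_le:
  assumes "0 < \<eta>" "\<eta> < s" "s + 1 < \<zeta>"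
  shows "\<bar>(s+1) powr (2*\<beta> - 1) * d\<psi> (\<zeta>/(s+1)) - s powr (2*\<beta> - 1) * d\<psi> (\<zeta>/s)\<bar>
    \<le> (1 + 2/\<eta>)^2 * C * s powr (2*\<beta> - \<alpha> - 1) * (\<zeta> powr (\<alpha> - 1) + 2/\<alpha> * (\<zeta> - s) powr (\<alpha> - 1))"
proof -
  define B where "B = (1 + 2/\<eta>)^2 * C * s powr (2*\<beta> - \<alpha> - 1)"
  define G where "G a = B * (\<zeta> powr (\<alpha> - 1) * a - (\<zeta> - a) powr \<alpha> / \<alpha>)" for a
  have B: "0 \<le> B" using C_nonneg by (simp add: B_def)
  have dG: "(G has_real_derivative B * (\<zeta> powr (\<alpha> - 1) + (\<zeta> - a) powr (\<alpha> - 1))) (at a)"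
    if "a < \<zeta>" for a
  proof -
    have "((\<lambda>a. (\<zeta> - a) powr \<alpha>) has_real_derivative \<alpha> * (\<zeta> - a) powr (\<alpha> - 1) * (-1)) (at a)"
    proof (rule DERIV_chain2[where f = "\<lambda>x. x powr \<alpha>"])
      show "((\<lambda>x. x powr \<alpha>) has_real_derivative \<alpha> * (\<zeta> - a) powr (\<alpha> - 1)) (at (\<zeta> - a))"
        using that by (intro has_real_derivative_powr) simp
    qed (auto intro!: derivative_eq_intros)
    then have "(G has_real_derivative B * (\<zeta> powr (\<alpha> - 1) * 1 - \<alpha> * (\<zeta> - a) powr (\<alpha> - 1) * (-1) / \<alpha>)) (at a)"
      unfolding G_def by (intro DERIV_cmult DERIV_diff DERIV_cdivide DERIV_ident)
    then show ?thesis using exponents by simp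
  qed
  have "\<bar>(s+1) powr (2*\<beta> - 1) * d\<psi> (\<zeta>/(s+1)) - s powr (2*\<beta> - 1) * d\<psi> (\<zeta>/s)\<bar> \<le> G (s+1) - G s"
  proof (rule abs_diff_le_of_deriv_majorant[of s "s+1" "\<lambda>a. a powr (2*\<beta> - 1) * d\<psi> (\<zeta>/a)"
        "\<lambda>a. (2*\<beta> - 1) * a powr (2*\<beta> - 2) * d\<psi> (\<zeta>/a) + a powr (2*\<beta> - 1) * (dd\<psi> (\<zeta>/a) * (- \<zeta>/a^2))"
        G "\<lambda>a. B * (\<zeta> powr (\<alpha> - 1) + (\<zeta> - a) powr (\<alpha> - 1))"])
    fix a assume a: "s < a" "a < s + 1"
    have a_le: "a powr (2*\<beta> - \<alpha> - 1) \<le> (1 + 2/\<eta>)^2 * s powr (2*\<beta> - \<alpha> - 1)"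
      using a assms exponents by (intro powr_le_of_near) auto
    then have "C * a powr (2*\<beta> - \<alpha> - 1) * (\<zeta> powr (\<alpha> - 1) + (\<zeta> - a) powr (\<alpha> - 1))
        \<le> B * (\<zeta> powr (\<alpha> - 1) + (\<zeta> - a) powr (\<alpha> - 1))"
    proof -
      have "C * a powr (2*\<beta> - \<alpha> - 1) * (\<zeta> powr (\<alpha> - 1) + (\<zeta> - a) powr (\<alpha> - 1))
          \<le> C * ((1 + 2/\<eta>)^2 * s powr (2*\<beta> - \<alpha> - 1)) * (\<zeta> powr (\<alpha> - 1) + (\<zeta> - a) powr (\<alpha> - 1))"
        using a_le C_nonneg by (intro mult_right_mono mult_left_mono) auto
      then show ?thesis by (simp add: B_def mult_ac)
    qed
    with abs_rescaled_dpsi_deriv_le[of a \<zeta>] a assms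
    show "\<bar>(2*\<beta> - 1) * a powr (2*\<beta> - 2) * d\<psi> (\<zeta>/a) + a powr (2*\<beta> - 1) * (dd\<psi> (\<zeta>/a) * (- \<zeta>/a^2))\<bar>
        \<le> B * (\<zeta> powr (\<alpha> - 1) + (\<zeta> - a) powr (\<alpha> - 1))"
      by linarith
  qed (use assms has_deriv_rescaled_dpsi dG in auto)
  also have "G (s+1) - G s = B * (\<zeta> powr (\<alpha> - 1) + ((\<zeta> - s) powr \<alpha> - (\<zeta> - s - 1) powr \<alpha>) / \<alpha>)"
    by (simp add: G_def algebra_simps diff_divide_distrib)
  also have "\<dots> \<le> B * (\<zeta> powr (\<alpha> - 1) + 2/\<alpha> * (\<zeta> - s) powr (\<alpha> - 1))"
    using powr_sub_one_bounds(2)[of "\<zeta> - s" \<alpha>] assms exponents B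
    by (intro mult_left_mono add_left_mono) (auto simp: divide_right_mono)
  finally show ?thesis by (simp add: B_def)
qed

lemma second_diff_ss_kernel_far_le:
  assumes "0 < \<eta>" "\<eta> < s" "s + 1 \<le> t" "t + 1 \<le> c1 * s" "1 \<le> c1"
  shows "\<bar>second_diff (ss_kernel \<psi> \<beta>) s t\<bar>
    \<le> (1 + 2/\<eta>)^2 * C * (1 + 2/\<alpha>) * c1 * s powr (2*\<beta> - \<alpha> - 1) * ((t - s) powr (\<alpha> - 1) + s powr (\<alpha> - 1))"
proof -
  obtain \<zeta> where \<zeta>: "t < \<zeta>" "\<zeta> < t + 1" and eq:
    "second_diff (ss_kernel \<psi> \<beta>) s t
      = (s+1) powr (2*\<beta> - 1) * d\<psi> (\<zeta>/(s+1)) - s powr (2*\<beta> - 1) * d\<psi> (\<zeta>/s)"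
    using second_diff_ss_kernel_far_mvt assms by (metis less_trans)
  have "\<bar>second_diff (ss_kernel \<psi> \<beta>) s t\<bar>
      \<le> (1 + 2/\<eta>)^2 * C * s powr (2*\<beta> - \<alpha> - 1) * (\<zeta> powr (\<alpha> - 1) + 2/\<alpha> * (\<zeta> - s) powr (\<alpha> - 1))"
    unfolding eq using assms \<zeta> by (intro rescaled_dpsi_diff_le) auto
  also have "\<dots> \<le> (1 + 2/\<eta>)^2 * C * s powr (2*\<beta> - \<alpha> - 1)
      * ((1 + 2/\<alpha>) * c1 * ((t - s) powr (\<alpha> - 1) + s powr (\<alpha> - 1)))"
    using far_powr_sum_le[of s t \<zeta> c1 \<alpha>] assms \<zeta> exponents C_nonneg
    by (intro mult_left_mono) auto
  finally show ?thesis by (simp add: mult_ac)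
qed

end

lemma second_diff_ss_kernel_near_le:
  fixes g :: "real \<Rightarrow> real" and \<eta> s t \<beta> B :: real
  assumes "0 < \<eta>" "\<eta> < s" "s < t" "t < s + 1" "0 \<le> \<beta>" "\<beta> \<le> 1"
    and g: "\<And>x. 1 \<le> x \<Longrightarrow> x \<le> 1 + 2/s \<Longrightarrow> \<bar>g x\<bar> \<le> B"
  shows "\<bar>second_diff (ss_kernel g \<beta>) s t\<bar> \<le> 4 * ((1 + 2/\<eta>)^2 * s powr (2*\<beta>) * B)"
proof -
  have "0 \<le> B" using g[of 1] assms by (smt (verit) divide_nonneg_nonneg)
  have kernel: "\<bar>ss_kernel g \<beta> m M\<bar> \<le> (1 + 2/\<eta>)^2 * s powr (2*\<beta>) * B"
    if "s \<le> m" "m \<le> s + 2" "m \<le> M" "M \<le> m + 2" for m M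
  proof -
    have "M/m \<le> 1 + 2/m" using that assms by (simp add: field_simps)
    also have "\<dots> \<le> 1 + 2/s" using that assms by (simp add: frac_le)
    finally have "\<bar>g (M/m)\<bar> \<le> B" using that assms by (intro g) auto
    moreover have "m powr (2*\<beta>) \<le> (1 + 2/\<eta>)^2 * s powr (2*\<beta>)"
      using that assms by (intro powr_le_of_near) auto
    ultimately show ?thesis
      using that \<open>0 \<le> B\<close> by (simp add: ss_kernel_le abs_mult mult_mono)
  qed
  have "second_diff (ss_kernel g \<beta>) s t
      = ss_kernel g \<beta> (s+1) (t+1) - ss_kernel g \<beta> s (t+1) - ss_kernel g \<beta> t (s+1) + ss_kernel g \<beta> s t"
    unfolding second_diff_def by (simp add: ss_kernel_commute)
  moreover have "\<bar>ss_kernel g \<beta> (s+1) (t+1)\<bar> \<le> (1 + 2/\<eta>)^2 * s powr (2*\<beta>) * B"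
    "\<bar>ss_kernel g \<beta> s (t+1)\<bar> \<le> (1 + 2/\<eta>)^2 * s powr (2*\<beta>) * B"
    "\<bar>ss_kernel g \<beta> t (s+1)\<bar> \<le> (1 + 2/\<eta>)^2 * s powr (2*\<beta>) * B"
    "\<bar>ss_kernel g \<beta> s t\<bar> \<le> (1 + 2/\<eta>)^2 * s powr (2*\<beta>) * B"
    using assms by (auto intro!: kernel)
  ultimately show ?thesis by linarith
qed

lemma second_diff_ss_kernel_const_near:
  fixes \<eta> s t \<beta> :: real
  assumes "0 < \<eta>" "\<eta> < s" "s < t" "t < s + 1" "0 \<le> \<beta>" "\<beta> \<le> 1"
  shows "\<bar>second_diff (ss_kernel (\<lambda>_. 1) \<beta>) s t\<bar> \<le> 4 * (1 + 2/\<eta>)^2 * s powr (2*\<beta> - 1)"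
proof -
  have "second_diff (ss_kernel (\<lambda>_. 1) \<beta>) s t = (s+1) powr (2*\<beta>) - t powr (2*\<beta>)"
    using assms by (simp add: second_diff_def ss_kernel_def min_def)
  also have "\<bar>\<dots>\<bar> \<le> 2 * \<bar>2*\<beta>\<bar> * (1 + 2/\<eta>)^2 * s powr (2*\<beta> - 1) * (s + 1 - t)"
    using assms by (intro abs_powr_diff_le_near) auto
  also have "\<dots> \<le> 2 * 2 * (1 + 2/\<eta>)^2 * s powr (2*\<beta> - 1) * 1"
    using assms by (intro mult_mono) auto
  finally show ?thesis by simp
qed

lemma ss_kernel_affine:
  assumes "0 < a" "0 < b"
  shows "ss_kernel (\<lambda>x. 1 + \<beta> * (x - 1)) \<beta> a b
    = (min a b) powr (2*\<beta>) + \<beta> * (min a b) powr (2*\<beta> - 1) * \<bar>a - b\<bar>"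
proof -
  have m: "0 < min a b" "\<bar>a - b\<bar> = max a b - min a b" using assms by auto
  have r: "max a b / min a b - 1 = \<bar>a - b\<bar> / min a b"
  proof -
    have "min a b \<noteq> 0" using assms by (auto simp: min_def)
    then show ?thesis unfolding m(2) by (simp add: diff_divide_distrib)
  qed
  have "ss_kernel (\<lambda>x. 1 + \<beta> * (x - 1)) \<beta> a b
      = (min a b) powr (2*\<beta>) * (1 + \<beta> * (\<bar>a - b\<bar> / min a b))"
    by (simp only: ss_kernel_def r)
  also have "\<dots> = (min a b) powr (2*\<beta>) + \<beta> * ((min a b) powr (2*\<beta>) / min a b) * \<bar>a - b\<bar>"
    by (simp add: algebra_simps)
  finally show ?thesis using m(1) by (simp add: powr_diff)
qed

lemma powr_linearization_near_le:
  fixes \<eta> s t p :: real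
  assumes "0 < \<eta>" "\<eta> < s" "s < t" "t < s + 1" "0 \<le> p" "p \<le> 2"
  shows "\<bar>(s+1) powr p - t powr p - p * t powr (p - 1) * (s + 1 - t)\<bar> \<le> 4 * (1 + 2/\<eta>)^2 * s powr (p - 2)"
proof -
  have "\<And>x. t \<le> x \<Longrightarrow> x \<le> s + 1 \<Longrightarrow> ((\<lambda>z. z powr p) has_real_derivative p * x powr (p - 1)) (at x)"
    using assms by (intro has_real_derivative_powr) auto
  from MVT2[OF assms(4) this] obtain \<xi> where \<xi>: "t < \<xi>" "\<xi> < s + 1"
    "(s+1) powr p - t powr p = (s + 1 - t) * (p * \<xi> powr (p - 1))" by blast
  have "\<bar>\<xi> powr (p - 1) - t powr (p - 1)\<bar> \<le> 2 * \<bar>p - 1\<bar> * (1 + 2/\<eta>)^2 * s powr (p - 1 - 1) * (\<xi> - t)"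
    using assms \<xi> by (intro abs_powr_diff_le_near) auto
  also have "\<dots> \<le> 2 * 1 * (1 + 2/\<eta>)^2 * s powr (p - 2) * 1"
    using assms \<xi> by (intro mult_mono) auto
  finally have D: "\<bar>\<xi> powr (p - 1) - t powr (p - 1)\<bar> \<le> 2 * (1 + 2/\<eta>)^2 * s powr (p - 2)" by simp
  have "(s+1) powr p - t powr p - p * t powr (p - 1) * (s + 1 - t)
      = (s + 1 - t) * p * (\<xi> powr (p - 1) - t powr (p - 1))"
    unfolding \<xi>(3) by (simp add: algebra_simps)
  then have "\<bar>(s+1) powr p - t powr p - p * t powr (p - 1) * (s + 1 - t)\<bar>
      = \<bar>s + 1 - t\<bar> * \<bar>p\<bar> * \<bar>\<xi> powr (p - 1) - t powr (p - 1)\<bar>"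
    by (simp only: abs_mult)
  also have "\<dots> \<le> 1 * 2 * (2 * (1 + 2/\<eta>)^2 * s powr (p - 2))"
    using assms D by (intro mult_mono) auto
  finally show ?thesis by simp
qed

lemma second_diff_ss_kernel_affine_near:
  fixes \<eta> s t \<beta> :: real
  assumes "0 < \<eta>" "\<eta> < s" "s < t" "t < s + 1" "0 \<le> \<beta>" "\<beta> \<le> 1"
  shows "\<bar>second_diff (ss_kernel (\<lambda>x. 1 + \<beta> * (x - 1)) \<beta>) s t\<bar> \<le> 6 * (1 + 2/\<eta>)^2 * s powr (2*\<beta> - 2)"
proof -
  define c where "c = 2 * (1 + 2/\<eta>)^2 * s powr (2*\<beta> - 2)"
  have lip: "\<bar>x powr (2*\<beta> - 1) - y powr (2*\<beta> - 1)\<bar> \<le> c" if "s \<le> y" "y \<le> x" "x \<le> s + 1" for x y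
  proof -
    have "\<bar>x powr (2*\<beta> - 1) - y powr (2*\<beta> - 1)\<bar>
        \<le> 2 * \<bar>2*\<beta> - 1\<bar> * (1 + 2/\<eta>)^2 * s powr (2*\<beta> - 1 - 1) * (x - y)"
      using assms that by (intro abs_powr_diff_le_near) auto
    also have "\<dots> \<le> 2 * 1 * (1 + 2/\<eta>)^2 * s powr (2*\<beta> - 2) * 1"
      using assms that by (intro mult_mono) auto
    finally show ?thesis by (simp add: c_def)
  qed
  have "ss_kernel (\<lambda>x. 1 + \<beta> * (x - 1)) \<beta> (t+1) (s+1)
      = (s+1) powr (2*\<beta>) + \<beta> * (s+1) powr (2*\<beta> - 1) * (t - s)"
    "ss_kernel (\<lambda>x. 1 + \<beta> * (x - 1)) \<beta> (t+1) s
      = s powr (2*\<beta>) + \<beta> * s powr (2*\<beta> - 1) * (t + 1 - s)"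
    "ss_kernel (\<lambda>x. 1 + \<beta> * (x - 1)) \<beta> t (s+1)
      = t powr (2*\<beta>) + \<beta> * t powr (2*\<beta> - 1) * (s + 1 - t)"
    "ss_kernel (\<lambda>x. 1 + \<beta> * (x - 1)) \<beta> t s
      = s powr (2*\<beta>) + \<beta> * s powr (2*\<beta> - 1) * (t - s)"
    using assms by (simp_all add: ss_kernel_affine min_def)
  then have "second_diff (ss_kernel (\<lambda>x. 1 + \<beta> * (x - 1)) \<beta>) s t
      = ((s+1) powr (2*\<beta>) - t powr (2*\<beta>) - 2*\<beta> * t powr (2*\<beta> - 1) * (s + 1 - t))
        + \<beta> * (s + 1 - t) * (t powr (2*\<beta> - 1) - s powr (2*\<beta> - 1))
        + \<beta> * (t - s) * ((s+1) powr (2*\<beta> - 1) - s powr (2*\<beta> - 1))"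
    unfolding second_diff_def by (simp add: algebra_simps)
  moreover have "\<bar>(s+1) powr (2*\<beta>) - t powr (2*\<beta>) - 2*\<beta> * t powr (2*\<beta> - 1) * (s + 1 - t)\<bar> \<le> 2 * c"
    using powr_linearization_near_le[of \<eta> s t "2*\<beta>"] assms by (simp add: c_def)
  moreover have "\<bar>\<beta> * (s + 1 - t) * (t powr (2*\<beta> - 1) - s powr (2*\<beta> - 1))\<bar> \<le> \<beta> * (s + 1 - t) * c"
    using lip[of s t] assms by (simp add: abs_mult mult_left_mono)
  moreover have "\<bar>\<beta> * (t - s) * ((s+1) powr (2*\<beta> - 1) - s powr (2*\<beta> - 1))\<bar> \<le> \<beta> * (t - s) * c"
    using lip[of s "s+1"] assms by (simp add: abs_mult mult_left_mono)
  moreover have "\<beta> * (s + 1 - t) * c + \<beta> * (t - s) * c \<le> c"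
    using assms by (simp add: algebra_simps c_def mult_left_le_one_le)
  ultimately show ?thesis by (simp add: c_def)
qed

context regular_part
begin

lemma second_diff_ss_kernel_near_lt1:
  assumes "\<alpha> < 1" "0 < \<eta>" "\<eta> < s" "s < t" "t < s + 1"
  shows "\<bar>second_diff (ss_kernel \<psi> \<beta>) s t\<bar>
    \<le> (4 * (1 + 2/\<eta>)^2 * \<bar>\<psi> 1\<bar> + 8 * C * (1 + 2/\<eta>)^2) * s powr (2*\<beta> - 1)"
proof -
  have "second_diff (ss_kernel \<psi> \<beta>) s t
      = \<psi> 1 * second_diff (ss_kernel (\<lambda>_. 1) \<beta>) s t + second_diff (ss_kernel (\<lambda>x. \<psi> x - \<psi> 1) \<beta>) s t"
    using second_diff_ss_kernel_add[of "\<psi> 1" "\<lambda>_. 1" "\<lambda>x. \<psi> x - \<psi> 1" \<beta> s t] by simp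
  then have "\<bar>second_diff (ss_kernel \<psi> \<beta>) s t\<bar>
      \<le> \<bar>\<psi> 1\<bar> * \<bar>second_diff (ss_kernel (\<lambda>_. 1) \<beta>) s t\<bar> + \<bar>second_diff (ss_kernel (\<lambda>x. \<psi> x - \<psi> 1) \<beta>) s t\<bar>"
    by (metis abs_mult abs_triangle_ineq)
  also have "\<dots> \<le> \<bar>\<psi> 1\<bar> * (4 * (1 + 2/\<eta>)^2 * s powr (2*\<beta> - 1))
      + 4 * ((1 + 2/\<eta>)^2 * s powr (2*\<beta>) * (C * (2/s)))"
  proof (intro add_mono mult_left_mono second_diff_ss_kernel_const_near second_diff_ss_kernel_near_le)
    show "\<bar>\<psi> x - \<psi> 1\<bar> \<le> C * (2/s)" if "1 \<le> x" "x \<le> 1 + 2/s" for x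
      using psi_diff_le[OF assms(1) that(1)] C_nonneg that mult_left_mono[of "x - 1" "2/s" C] by simp
  qed (use assms exponents in auto)
  also have "\<dots> = (4 * (1 + 2/\<eta>)^2 * \<bar>\<psi> 1\<bar> + 8 * C * (1 + 2/\<eta>)^2) * s powr (2*\<beta> - 1)"
  proof -
    have e: "s powr (2*\<beta> - 1) = s powr (2*\<beta>) / s" using assms by (simp add: powr_diff)
    have "s \<noteq> 0" using assms by simp
    then show ?thesis unfolding e by (simp add: field_simps)
  qed
  finally show ?thesis .
qed

lemma second_diff_ss_kernel_near_ge1:
  assumes "1 \<le> \<alpha>" "0 < \<eta>" "\<eta> < s" "s < t" "t < s + 1"
  shows "\<bar>second_diff (ss_kernel \<psi> \<beta>) s t\<bar>
    \<le> (6 * (1 + 2/\<eta>)^2 * \<bar>\<psi> 1\<bar> + 16 * C * (1 + 2/\<eta>)^2) * s powr (2*\<beta> - 2)"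
proof -
  define R where "R x = \<psi> x - \<psi> 1 - d\<psi> 1 * (x - 1)" for x
  have "\<psi> = (\<lambda>x. \<psi> 1 * (1 + \<beta> * (x - 1)) + R x)"
    using dpsi_one[OF assms(1)] by (auto simp: R_def algebra_simps)
  then have "second_diff (ss_kernel \<psi> \<beta>) s t
      = \<psi> 1 * second_diff (ss_kernel (\<lambda>x. 1 + \<beta> * (x - 1)) \<beta>) s t + second_diff (ss_kernel R \<beta>) s t"
    by (metis (no_types) second_diff_ss_kernel_add)
  then have "\<bar>second_diff (ss_kernel \<psi> \<beta>) s t\<bar>
      \<le> \<bar>\<psi> 1\<bar> * \<bar>second_diff (ss_kernel (\<lambda>x. 1 + \<beta> * (x - 1)) \<beta>) s t\<bar> + \<bar>second_diff (ss_kernel R \<beta>) s t\<bar>"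
    by (metis abs_mult abs_triangle_ineq)
  also have "\<dots> \<le> \<bar>\<psi> 1\<bar> * (6 * (1 + 2/\<eta>)^2 * s powr (2*\<beta> - 2))
      + 4 * ((1 + 2/\<eta>)^2 * s powr (2*\<beta>) * (C * (2/s)^2))"
  proof (intro add_mono mult_left_mono second_diff_ss_kernel_affine_near second_diff_ss_kernel_near_le)
    show "\<bar>R x\<bar> \<le> C * (2/s)^2" if "1 \<le> x" "x \<le> 1 + 2/s" for x
    proof -
      have "C * (x - 1)^2 \<le> C * (2/s)^2"
        using C_nonneg that by (intro mult_left_mono power_mono) auto
      then show ?thesis using psi_taylor_le[OF assms(1) that(1)] by (simp add: R_def)
    qed
  qed (use assms exponents in auto)
  also have "\<dots> = (6 * (1 + 2/\<eta>)^2 * \<bar>\<psi> 1\<bar> + 16 * C * (1 + 2/\<eta>)^2) * s powr (2*\<beta> - 2)"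
  proof -
    have e: "s powr (2*\<beta> - 2) = s powr (2*\<beta>) / s^2" using assms by (simp add: powr_diff)
    have "s \<noteq> 0" using assms by simp
    then show ?thesis unfolding e by (simp add: field_simps power2_eq_square)
  qed
  finally show ?thesis .
qed

end

section \<open>The remainder\<close>

definition cov_remainder :: "(real \<Rightarrow> real) \<Rightarrow> real \<Rightarrow> real \<Rightarrow> real \<Rightarrow> real \<Rightarrow> real \<Rightarrow> real" where
  "cov_remainder \<phi> \<beta> \<alpha> lam s t =
     second_diff (ss_kernel \<phi> \<beta>) s t / (lam * (min s t) powr (2*\<beta> - \<alpha>)) - 2 * a_alpha \<alpha> (s - t)"

definition remainder_estimate :: "real \<Rightarrow> real \<Rightarrow> real \<Rightarrow> real \<Rightarrow> real \<Rightarrow> bool" where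
  "remainder_estimate \<alpha> K u s t \<longleftrightarrow>
     (\<bar>s - t\<bar> \<ge> 1 \<longrightarrow>
        \<bar>u\<bar> \<le> K * ((min s t) powr (-1) * \<bar>s - t\<bar> powr (\<alpha> - 1) + (min s t) powr (\<alpha> - 2))) \<and>
     (\<bar>s - t\<bar> < 1 \<longrightarrow>
        \<bar>u\<bar> \<le> K * ((if \<alpha> < 1 then (min s t) powr (\<alpha> - 1) else 0)
                   + (if \<alpha> \<ge> 1 then (min s t) powr (\<alpha> - 2) else 0)))"

lemma remainder_estimate_commute: "remainder_estimate \<alpha> K u s t = remainder_estimate \<alpha> K u t s"
  unfolding remainder_estimate_def by (simp add: abs_minus_commute min.commute)

lemma cov_remainder_commute: "cov_remainder \<phi> \<beta> \<alpha> lam s t = cov_remainder \<phi> \<beta> \<alpha> lam t s"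
proof -
  have "a_alpha \<alpha> (s - t) = a_alpha \<alpha> (t - s)" using a_alpha_minus[of \<alpha> "t - s"] by simp
  then show ?thesis
    unfolding cov_remainder_def
    using second_diff_commute[of "ss_kernel \<phi> \<beta>"] ss_kernel_commute by (metis min.commute)
qed

lemma second_diff_eq_cov_remainder:
  assumes "lam \<noteq> 0" "0 < s" "0 < t"
  shows "second_diff (ss_kernel \<phi> \<beta>) s t
    = lam * (min s t) powr (2*\<beta> - \<alpha>) * (2 * a_alpha \<alpha> (s - t) + cov_remainder \<phi> \<beta> \<alpha> lam s t)"
  using assms by (simp add: cov_remainder_def)

lemma continuous_on_ss_kernel:
  fixes f g :: "'b::topological_space \<Rightarrow> real"
  assumes "continuous_on {1..} \<phi>" "continuous_on S f" "continuous_on S g"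
    and pos: "\<And>p. p \<in> S \<Longrightarrow> 0 < f p \<and> 0 < g p"
  shows "continuous_on S (\<lambda>p. ss_kernel \<phi> \<beta> (f p) (g p))"
proof -
  have "continuous_on S (\<lambda>p. max (f p) (g p) / min (f p) (g p))"
    using assms by (intro continuous_intros) (auto dest: pos)
  moreover have "(\<lambda>p. max (f p) (g p) / min (f p) (g p)) ` S \<subseteq> {1..}"
    using pos by (auto simp: field_simps)
  ultimately have "continuous_on S (\<lambda>p. \<phi> (max (f p) (g p) / min (f p) (g p)))"
    by (rule continuous_on_compose2[OF assms(1)])
  moreover have "continuous_on S (\<lambda>p. min (f p) (g p) powr (2*\<beta>))"
    using assms by (intro continuous_on_powr' continuous_intros) (auto dest: pos)
  ultimately show ?thesis unfolding ss_kernel_def by (rule continuous_on_mult[rotated])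
qed

lemma continuous_on_cov_remainder:
  assumes "continuous_on {1..} \<phi>" "0 < \<alpha>" "lam \<noteq> 0"
  shows "continuous_on ({0<..} \<times> {0<..}) (\<lambda>(s, t). cov_remainder \<phi> \<beta> \<alpha> lam s t)"
proof -
  let ?S = "{0<..} \<times> {0<..} :: (real \<times> real) set"
  have "continuous_on ?S (\<lambda>p. second_diff (ss_kernel \<phi> \<beta>) (fst p) (snd p))"
    unfolding second_diff_def using assms(1)
    by (intro continuous_intros continuous_on_ss_kernel) auto
  moreover have "continuous_on ?S (\<lambda>p. lam * (min (fst p) (snd p)) powr (2*\<beta> - \<alpha>))"
    by (intro continuous_intros continuous_on_powr') auto
  moreover have "continuous_on ?S (\<lambda>p. a_alpha \<alpha> (fst p - snd p))"
    unfolding a_alpha_def using assms(2) by (intro continuous_intros continuous_on_powr') auto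
  ultimately have "continuous_on ?S (\<lambda>p. cov_remainder \<phi> \<beta> \<alpha> lam (fst p) (snd p))"
    unfolding cov_remainder_def using assms(3) by (intro continuous_intros) auto
  then show ?thesis by (simp add: case_prod_beta)
qed

lemma abs_cov_remainder_le:
  fixes s t lam \<alpha> \<beta> :: real
  assumes "0 < s" "s < t" "0 < lam" and "\<And>x. 1 \<le> x \<Longrightarrow> \<phi> x = - lam * (x - 1) powr \<alpha> + \<psi> x"
  shows "\<bar>cov_remainder \<phi> \<beta> \<alpha> lam s t\<bar>
    \<le> \<bar>second_diff (power_kernel (2*\<beta> - \<alpha>) \<alpha>) s t / s powr (2*\<beta> - \<alpha>) + 2 * a_alpha \<alpha> (t - s)\<bar>
      + \<bar>second_diff (ss_kernel \<psi> \<beta>) s t\<bar> / (lam * s powr (2*\<beta> - \<alpha>))"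
proof -
  have "a_alpha \<alpha> (s - t) = a_alpha \<alpha> (t - s)" using a_alpha_minus[of \<alpha> "t - s"] by simp
  moreover have "0 < t" using assms by simp
  ultimately have "cov_remainder \<phi> \<beta> \<alpha> lam s t
      = - (second_diff (power_kernel (2*\<beta> - \<alpha>) \<alpha>) s t / s powr (2*\<beta> - \<alpha>) + 2 * a_alpha \<alpha> (t - s))
        + second_diff (ss_kernel \<psi> \<beta>) s t / (lam * s powr (2*\<beta> - \<alpha>))"
    unfolding cov_remainder_def using second_diff_ss_kernel_split[OF assms(1) _ assms(4)] assms
    by (simp add: field_simps)
  then have "\<bar>cov_remainder \<phi> \<beta> \<alpha> lam s t\<bar>
      \<le> \<bar>second_diff (power_kernel (2*\<beta> - \<alpha>) \<alpha>) s t / s powr (2*\<beta> - \<alpha>) + 2 * a_alpha \<alpha> (t - s)\<bar>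
        + \<bar>second_diff (ss_kernel \<psi> \<beta>) s t / (lam * s powr (2*\<beta> - \<alpha>))\<bar>"
    by (metis abs_minus_cancel abs_triangle_ineq)
  also have "\<bar>second_diff (ss_kernel \<psi> \<beta>) s t / (lam * s powr (2*\<beta> - \<alpha>))\<bar>
      = \<bar>second_diff (ss_kernel \<psi> \<beta>) s t\<bar> / (lam * s powr (2*\<beta> - \<alpha>))"
    using assms by (simp add: abs_divide abs_mult)
  finally show ?thesis .
qed

context regular_part
begin

lemma cov_remainder_far_le:
  assumes \<phi>: "\<And>x. 1 \<le> x \<Longrightarrow> \<phi> x = - lam * (x - 1) powr \<alpha> + \<psi> x" and "0 < lam"
    and "0 < \<eta>" "\<eta> < s" "s + 1 \<le> t" "t + 1 \<le> c1 * s" "1 \<le> c1"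
  shows "\<bar>cov_remainder \<phi> \<beta> \<alpha> lam s t\<bar>
    \<le> (2 * (2 + 1/\<eta>) + (1 + 2/\<eta>)^2 * C * (1 + 2/\<alpha>) * c1 / lam)
       * (s powr (-1) * (t - s) powr (\<alpha> - 1) + s powr (\<alpha> - 2))"
proof -
  define K where "K = (1 + 2/\<eta>)^2 * C * (1 + 2/\<alpha>) * c1"
  have s0: "0 < s" using assms by simp
  have "\<bar>second_diff (power_kernel (2*\<beta> - \<alpha>) \<alpha>) s t / s powr (2*\<beta> - \<alpha>) + 2 * a_alpha \<alpha> (t - s)\<bar>
      \<le> 2 * (2 + 1/\<eta>) * (s powr (-1) * (t - s) powr (\<alpha> - 1))"
    using second_diff_power_kernel_far[of \<eta> s "t - s" "2*\<beta> - \<alpha>" \<alpha>] assms exponents by simp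
  also have "\<dots> \<le> 2 * (2 + 1/\<eta>) * (s powr (-1) * (t - s) powr (\<alpha> - 1) + s powr (\<alpha> - 2))"
    using assms by (intro mult_left_mono) auto
  finally have sing: "\<bar>second_diff (power_kernel (2*\<beta> - \<alpha>) \<alpha>) s t / s powr (2*\<beta> - \<alpha>) + 2 * a_alpha \<alpha> (t - s)\<bar>
      \<le> 2 * (2 + 1/\<eta>) * (s powr (-1) * (t - s) powr (\<alpha> - 1) + s powr (\<alpha> - 2))" .
  have "\<bar>second_diff (ss_kernel \<psi> \<beta>) s t\<bar> / (lam * s powr (2*\<beta> - \<alpha>))
      \<le> K * s powr (2*\<beta> - \<alpha> - 1) * ((t - s) powr (\<alpha> - 1) + s powr (\<alpha> - 1)) / (lam * s powr (2*\<beta> - \<alpha>))"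
    using second_diff_ss_kernel_far_le[of \<eta> s t c1] assms s0 by (intro divide_right_mono) (auto simp: K_def)
  also have "\<dots> = K / lam * (s powr (-1) * (t - s) powr (\<alpha> - 1) + s powr (\<alpha> - 2))"
  proof -
    have e: "s powr (2*\<beta> - \<alpha> - 1) = s powr (2*\<beta> - \<alpha>) * s powr (-1)"
      "s powr (\<alpha> - 2) = s powr (-1) * s powr (\<alpha> - 1)"
      by (subst powr_add[symmetric], simp)+
    show ?thesis unfolding e using s0 assms by (simp add: field_simps)
  qed
  finally show ?thesis
    using abs_cov_remainder_le[of s t lam \<phi> \<alpha> \<psi> \<beta>] sing assms s0 by (simp add: K_def algebra_simps)
qed

lemma cov_remainder_near_lt1_le:
  assumes \<phi>: "\<And>x. 1 \<le> x \<Longrightarrow> \<phi> x = - lam * (x - 1) powr \<alpha> + \<psi> x" and "0 < lam"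
    and "\<alpha> < 1" "0 < \<eta>" "\<eta> < s" "s < t" "t < s + 1"
  shows "\<bar>cov_remainder \<phi> \<beta> \<alpha> lam s t\<bar>
    \<le> (2 * (2 + 1/\<eta>) / \<eta> powr \<alpha> + (4 * (1 + 2/\<eta>)^2 * \<bar>\<psi> 1\<bar> + 8 * C * (1 + 2/\<eta>)^2) / lam)
       * s powr (\<alpha> - 1)"
proof -
  define K where "K = 4 * (1 + 2/\<eta>)^2 * \<bar>\<psi> 1\<bar> + 8 * C * (1 + 2/\<eta>)^2"
  have s0: "0 < s" using assms by simp
  have "\<bar>second_diff (power_kernel (2*\<beta> - \<alpha>) \<alpha>) s t / s powr (2*\<beta> - \<alpha>) + 2 * a_alpha \<alpha> (t - s)\<bar>
      \<le> 2 * (2 + 1/\<eta>) / s"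
    using second_diff_power_kernel_near[of \<eta> s "t - s" "2*\<beta> - \<alpha>" \<alpha>] assms exponents by simp
  also have "\<dots> \<le> 2 * (2 + 1/\<eta>) / \<eta> powr \<alpha> * s powr (\<alpha> - 1)"
  proof -
    have "\<eta> powr \<alpha> \<le> s powr \<alpha>" using assms exponents by (intro powr_mono2) auto
    then have "\<eta> powr \<alpha> / s \<le> s powr \<alpha> / s" using s0 by (intro divide_right_mono) auto
    also have "s powr \<alpha> / s = s powr (\<alpha> - 1)" using s0 by (simp add: powr_diff)
    finally have "1 / s \<le> s powr (\<alpha> - 1) / \<eta> powr \<alpha>" using assms by (simp add: field_simps)
    from mult_left_mono[OF this, of "2 * (2 + 1/\<eta>)"] show ?thesis using assms by simp
  qed
  finally have sing: "\<bar>second_diff (power_kernel (2*\<beta> - \<alpha>) \<alpha>) s t / s powr (2*\<beta> - \<alpha>) + 2 * a_alpha \<alpha> (t - s)\<bar>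
      \<le> 2 * (2 + 1/\<eta>) / \<eta> powr \<alpha> * s powr (\<alpha> - 1)" .
  have "\<bar>second_diff (ss_kernel \<psi> \<beta>) s t\<bar> / (lam * s powr (2*\<beta> - \<alpha>))
      \<le> K * s powr (2*\<beta> - 1) / (lam * s powr (2*\<beta> - \<alpha>))"
    using second_diff_ss_kernel_near_lt1 assms s0 by (intro divide_right_mono) (auto simp: K_def)
  also have "\<dots> = K / lam * s powr (\<alpha> - 1)"
  proof -
    have "s powr (2*\<beta> - 1) = s powr (2*\<beta> - \<alpha>) * s powr (\<alpha> - 1)" by (simp flip: powr_add)
    then show ?thesis using s0 assms by (simp add: field_simps)
  qed
  finally show ?thesis
    using abs_cov_remainder_le[of s t lam \<phi> \<alpha> \<psi> \<beta>] sing assms s0 by (simp add: K_def algebra_simps)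
qed

lemma cov_remainder_near_ge1_le:
  assumes \<phi>: "\<And>x. 1 \<le> x \<Longrightarrow> \<phi> x = - lam * (x - 1) powr \<alpha> + \<psi> x" and "0 < lam"
    and "1 \<le> \<alpha>" "0 < \<eta>" "\<eta> < s" "s < t" "t < s + 1"
  shows "\<bar>cov_remainder \<phi> \<beta> \<alpha> lam s t\<bar>
    \<le> (2 * (2 + 1/\<eta>) * \<eta> powr (1 - \<alpha>) + (6 * (1 + 2/\<eta>)^2 * \<bar>\<psi> 1\<bar> + 16 * C * (1 + 2/\<eta>)^2) / lam)
       * s powr (\<alpha> - 2)"
proof -
  define K where "K = 6 * (1 + 2/\<eta>)^2 * \<bar>\<psi> 1\<bar> + 16 * C * (1 + 2/\<eta>)^2"
  have s0: "0 < s" using assms by simp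
  have "\<bar>second_diff (power_kernel (2*\<beta> - \<alpha>) \<alpha>) s t / s powr (2*\<beta> - \<alpha>) + 2 * a_alpha \<alpha> (t - s)\<bar>
      \<le> 2 * (2 + 1/\<eta>) / s"
    using second_diff_power_kernel_near[of \<eta> s "t - s" "2*\<beta> - \<alpha>" \<alpha>] assms exponents by simp
  also have "\<dots> \<le> 2 * (2 + 1/\<eta>) * \<eta> powr (1 - \<alpha>) * s powr (\<alpha> - 2)"
  proof -
    have "s powr (1 - \<alpha>) \<le> \<eta> powr (1 - \<alpha>)" using assms by (intro powr_mono2') auto
    then have "s powr (1 - \<alpha>) * s powr (\<alpha> - 2) \<le> \<eta> powr (1 - \<alpha>) * s powr (\<alpha> - 2)"
      by (intro mult_right_mono) auto
    moreover have "s powr (1 - \<alpha>) * s powr (\<alpha> - 2) = 1 / s"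
      using s0 powr_add[of s "1 - \<alpha>" "\<alpha> - 2"] by (simp add: powr_minus_divide)
    ultimately have "1 / s \<le> \<eta> powr (1 - \<alpha>) * s powr (\<alpha> - 2)" by simp
    from mult_left_mono[OF this, of "2 * (2 + 1/\<eta>)"] show ?thesis using assms by (simp add: mult.assoc)
  qed
  finally have sing: "\<bar>second_diff (power_kernel (2*\<beta> - \<alpha>) \<alpha>) s t / s powr (2*\<beta> - \<alpha>) + 2 * a_alpha \<alpha> (t - s)\<bar>
      \<le> 2 * (2 + 1/\<eta>) * \<eta> powr (1 - \<alpha>) * s powr (\<alpha> - 2)" .
  have "\<bar>second_diff (ss_kernel \<psi> \<beta>) s t\<bar> / (lam * s powr (2*\<beta> - \<alpha>))
      \<le> K * s powr (2*\<beta> - 2) / (lam * s powr (2*\<beta> - \<alpha>))"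
    using second_diff_ss_kernel_near_ge1 assms s0 by (intro divide_right_mono) (auto simp: K_def)
  also have "\<dots> = K / lam * s powr (\<alpha> - 2)"
  proof -
    have "s powr (2*\<beta> - 2) = s powr (2*\<beta> - \<alpha>) * s powr (\<alpha> - 2)" by (simp flip: powr_add)
    then show ?thesis using s0 assms by (simp add: field_simps)
  qed
  finally show ?thesis
    using abs_cov_remainder_le[of s t lam \<phi> \<alpha> \<psi> \<beta>] sing assms s0 by (simp add: K_def algebra_simps)
qed

lemma cov_remainder_far_estimate:
  assumes \<phi>: "\<And>x. 1 \<le> x \<Longrightarrow> \<phi> x = - lam * (x - 1) powr \<alpha> + \<psi> x"
    and "0 < lam" "0 < \<eta>" "0 \<le> M1" "0 \<le> M2"
  obtains K where "0 \<le> K"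
    "\<And>s t. \<eta> < s \<Longrightarrow> s + 1 \<le> t \<Longrightarrow> t - s \<le> M1 * s + M2 \<Longrightarrow>
      \<bar>cov_remainder \<phi> \<beta> \<alpha> lam s t\<bar> \<le> K * (s powr (-1) * (t - s) powr (\<alpha> - 1) + s powr (\<alpha> - 2))"
proof -
  define c1 where "c1 = 1 + M1 + (M2 + 1)/\<eta>"
  show ?thesis
  proof (rule that)
    show "0 \<le> 2 * (2 + 1/\<eta>) + (1 + 2/\<eta>)^2 * C * (1 + 2/\<alpha>) * c1 / lam"
      unfolding c1_def using assms exponents C_nonneg by simp
    fix s t assume st: "\<eta> < s" "s + 1 \<le> t" "t - s \<le> M1 * s + M2"
    have "(M2 + 1) * 1 \<le> (M2 + 1) * (s / \<eta>)" using assms st by (intro mult_left_mono) auto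
    then have "M2 + 1 \<le> (M2 + 1)/\<eta> * s" by simp
    then have c1: "t + 1 \<le> c1 * s" "1 \<le> c1" using st assms by (auto simp: c1_def algebra_simps)
    show "\<bar>cov_remainder \<phi> \<beta> \<alpha> lam s t\<bar> \<le> (2 * (2 + 1/\<eta>) + (1 + 2/\<eta>)^2 * C * (1 + 2/\<alpha>) * c1 / lam)
        * (s powr (-1) * (t - s) powr (\<alpha> - 1) + s powr (\<alpha> - 2))"
      by (rule cov_remainder_far_le[OF \<phi> assms(2,3) st(1,2) c1])
  qed
qed

lemma cov_remainder_near_estimate:
  assumes \<phi>: "\<And>x. 1 \<le> x \<Longrightarrow> \<phi> x = - lam * (x - 1) powr \<alpha> + \<psi> x"
    and "0 < lam" "0 < \<eta>"
  obtains K where "0 \<le> K"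
    "\<And>s t. \<eta> < s \<Longrightarrow> s < t \<Longrightarrow> t < s + 1 \<Longrightarrow> \<bar>cov_remainder \<phi> \<beta> \<alpha> lam s t\<bar>
      \<le> K * ((if \<alpha> < 1 then s powr (\<alpha> - 1) else 0) + (if \<alpha> \<ge> 1 then s powr (\<alpha> - 2) else 0))"
proof (cases "\<alpha> < 1")
  case True
  show ?thesis
    by (rule that[of "2 * (2 + 1/\<eta>) / \<eta> powr \<alpha>
        + (4 * (1 + 2/\<eta>)^2 * \<bar>\<psi> 1\<bar> + 8 * C * (1 + 2/\<eta>)^2) / lam"])
      (use assms C_nonneg True cov_remainder_near_lt1_le[OF \<phi> assms(2) True assms(3)] in auto)
next
  case False
  then have "1 \<le> \<alpha>" by simp
  show ?thesis
    by (rule that[of "2 * (2 + 1/\<eta>) * \<eta> powr (1 - \<alpha>)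
        + (6 * (1 + 2/\<eta>)^2 * \<bar>\<psi> 1\<bar> + 16 * C * (1 + 2/\<eta>)^2) / lam"])
      (use assms C_nonneg False cov_remainder_near_ge1_le[OF \<phi> assms(2) \<open>1 \<le> \<alpha>\<close> assms(3)] in auto)
qed

lemma cov_remainder_estimate_ordered:
  assumes \<phi>: "\<And>x. 1 \<le> x \<Longrightarrow> \<phi> x = - lam * (x - 1) powr \<alpha> + \<psi> x"
    and "0 < lam" "0 < \<eta>" "0 \<le> M1" "0 \<le> M2"
  obtains K where "0 < K"
    "\<And>s t. \<eta> < s \<Longrightarrow> s < t \<Longrightarrow> t - s \<le> M1 * s + M2 \<Longrightarrow>
      remainder_estimate \<alpha> K (cov_remainder \<phi> \<beta> \<alpha> lam s t) s t"
proof -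
  obtain K1 where K1: "0 \<le> K1"
    "\<And>s t. \<eta> < s \<Longrightarrow> s + 1 \<le> t \<Longrightarrow> t - s \<le> M1 * s + M2 \<Longrightarrow>
      \<bar>cov_remainder \<phi> \<beta> \<alpha> lam s t\<bar> \<le> K1 * (s powr (-1) * (t - s) powr (\<alpha> - 1) + s powr (\<alpha> - 2))"
    using cov_remainder_far_estimate[OF assms] by blast
  obtain K2 where K2: "0 \<le> K2"
    "\<And>s t. \<eta> < s \<Longrightarrow> s < t \<Longrightarrow> t < s + 1 \<Longrightarrow> \<bar>cov_remainder \<phi> \<beta> \<alpha> lam s t\<bar>
      \<le> K2 * ((if \<alpha> < 1 then s powr (\<alpha> - 1) else 0) + (if \<alpha> \<ge> 1 then s powr (\<alpha> - 2) else 0))"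
    using cov_remainder_near_estimate[OF assms(1-3)] by blast
  show ?thesis
  proof (rule that[of "K1 + K2 + 1"])
    fix s t assume st: "\<eta> < s" "s < t" "t - s \<le> M1 * s + M2"
    have ms: "min s t = s" "\<bar>s - t\<bar> = t - s" using st by auto
    show "remainder_estimate \<alpha> (K1 + K2 + 1) (cov_remainder \<phi> \<beta> \<alpha> lam s t) s t"
      unfolding remainder_estimate_def ms
    proof (intro conjI impI)
      assume "1 \<le> t - s"
      then show "\<bar>cov_remainder \<phi> \<beta> \<alpha> lam s t\<bar>
          \<le> (K1 + K2 + 1) * (s powr (-1) * (t - s) powr (\<alpha> - 1) + s powr (\<alpha> - 2))"
        using K1(2)[OF st(1) _ st(3)] K2(1) by (smt (verit) mult_right_mono powr_ge_zero mult_nonneg_nonneg)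
    next
      assume "t - s < 1"
      then show "\<bar>cov_remainder \<phi> \<beta> \<alpha> lam s t\<bar>
          \<le> (K1 + K2 + 1) * ((if \<alpha> < 1 then s powr (\<alpha> - 1) else 0) + (if \<alpha> \<ge> 1 then s powr (\<alpha> - 2) else 0))"
        using K2(2)[OF st(1,2)] K1(1) by (smt (verit) mult_right_mono powr_ge_zero)
    qed
  qed (use K1 K2 in linarith)
qed

lemma cov_remainder_estimate:
  assumes \<phi>: "\<And>x. 1 \<le> x \<Longrightarrow> \<phi> x = - lam * (x - 1) powr \<alpha> + \<psi> x"
    and "0 < lam" "0 < \<eta>" "0 \<le> M1" "0 \<le> M2"
  obtains K where "0 < K"
    "\<And>s t. \<eta> < s \<Longrightarrow> \<eta> < t \<Longrightarrow> \<eta> \<le> \<bar>s - t\<bar> \<Longrightarrow> \<bar>s - t\<bar> \<le> M1 * min s t + M2 \<Longrightarrow>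
      remainder_estimate \<alpha> K (cov_remainder \<phi> \<beta> \<alpha> lam s t) s t"
proof -
  obtain K where K: "0 < K"
    "\<And>s t. \<eta> < s \<Longrightarrow> s < t \<Longrightarrow> t - s \<le> M1 * s + M2 \<Longrightarrow>
      remainder_estimate \<alpha> K (cov_remainder \<phi> \<beta> \<alpha> lam s t) s t"
    using cov_remainder_estimate_ordered[OF assms] by blast
  show ?thesis
  proof (rule that[OF K(1)])
    fix s t assume st: "\<eta> < s" "\<eta> < t" "\<eta> \<le> \<bar>s - t\<bar>" "\<bar>s - t\<bar> \<le> M1 * min s t + M2"
    show "remainder_estimate \<alpha> K (cov_remainder \<phi> \<beta> \<alpha> lam s t) s t"
    proof (cases "s < t")
      case True
      then show ?thesis using K(2)[of s t] st by simp
    next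
      case False
      then have "t < s" using st assms by auto
      then show ?thesis using K(2)[of t s] st
        by (simp add: remainder_estimate_commute cov_remainder_commute)
    qed
  qed
qed

end

section \<open>Covariance of the increments\<close>

lemma gaussian_rv_square_integrable:
  assumes "prob_space M" "gaussian_rv M Y" "Y \<in> borel_measurable M"
  shows "integrable M (\<lambda>\<omega>. (Y \<omega>)^2)"
proof -
  interpret prob_space M by fact
  from assms(2) consider (normal) \<mu> \<sigma> where "\<sigma> > 0" "distributed M lborel Y (normal_density \<mu> \<sigma>)"
    | (const) c where "AE \<omega> in M. Y \<omega> = c"
    unfolding gaussian_rv_def by blast
  then show ?thesis
  proof cases
    case normal
    have e: "(\<lambda>x. normal_density \<mu> \<sigma> x * x^2) = (\<lambda>x. normal_density \<mu> \<sigma> x * (x - \<mu>)^2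
        + 2 * \<mu> * (normal_density \<mu> \<sigma> x * (x - \<mu>)^1) + \<mu>^2 * normal_density \<mu> \<sigma> x)"
      by (rule ext) (simp add: power2_eq_square algebra_simps)
    have "integrable lborel (\<lambda>x. normal_density \<mu> \<sigma> x * x^2)"
      unfolding e by (intro Bochner_Integration.integrable_add Bochner_Integration.integrable_mult_right
          integrable_normal_moment[OF normal(1)] integrable_normal_density[OF normal(1)])
    then show ?thesis using distributed_integrable[OF normal(2), of "\<lambda>x. x^2"] by simp
  next
    case const
    have "integrable M (\<lambda>_. c^2)" by simp
    moreover have "(\<lambda>\<omega>. (Y \<omega>)^2) \<in> borel_measurable M" using assms(3) by measurable
    moreover have "AE \<omega> in M. c^2 = (Y \<omega>)^2" using const by auto
    ultimately show ?thesis by (rule integrable_cong_AE_imp)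
  qed
qed

lemma integrable_mult_of_square_integrable:
  fixes f g :: "'a \<Rightarrow> real"
  assumes "integrable M (\<lambda>\<omega>. (f \<omega>)^2)" "integrable M (\<lambda>\<omega>. (g \<omega>)^2)"
    "f \<in> borel_measurable M" "g \<in> borel_measurable M"
  shows "integrable M (\<lambda>\<omega>. f \<omega> * g \<omega>)"
proof (rule Bochner_Integration.integrable_bound)
  show "integrable M (\<lambda>\<omega>. (f \<omega>)^2 + (g \<omega>)^2)" using assms by auto
  show "(\<lambda>\<omega>. f \<omega> * g \<omega>) \<in> borel_measurable M" using assms by measurable
  have "\<bar>x * y\<bar> \<le> x^2 + y^2" for x y :: real
  proof -
    have "0 \<le> (\<bar>x\<bar> - \<bar>y\<bar>)^2" by simp
    then have "2 * \<bar>x\<bar> * \<bar>y\<bar> \<le> x^2 + y^2" by (simp add: power2_eq_square algebra_simps abs_mult_self_eq)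
    moreover have "0 \<le> \<bar>x\<bar> * \<bar>y\<bar>" by simp
    ultimately show ?thesis unfolding abs_mult by linarith
  qed
  then show "AE \<omega> in M. norm (f \<omega> * g \<omega>) \<le> norm ((f \<omega>)^2 + (g \<omega>)^2)" by simp
qed

lemma gaussian_process_integrable_mult:
  assumes "prob_space M" "gaussian_process M X" "0 \<le> u" "0 \<le> v"
  shows "integrable M (\<lambda>\<omega>. X u \<omega> * X v \<omega>)"
proof -
  have "gaussian_rv M (X w)" "X w \<in> borel_measurable M" if "0 \<le> w" for w
  proof -
    have "\<forall>I c. finite I \<longrightarrow> I \<subseteq> {0..} \<longrightarrow> gaussian_rv M (\<lambda>\<omega>. \<Sum>t\<in>I. c t * X t \<omega>)"
      using assms(2) unfolding gaussian_process_def by (rule conjunct2)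
    then have "gaussian_rv M (\<lambda>\<omega>. \<Sum>t\<in>{w}. (\<lambda>_. 1) t * X t \<omega>)"
      using that by (elim allE[of _ "{w}"] allE[of _ "\<lambda>_. 1"]) auto
    then show "gaussian_rv M (X w)" by simp
    show "X w \<in> borel_measurable M" using assms(2) that unfolding gaussian_process_def by simp
  qed
  with gaussian_rv_square_integrable[OF assms(1)] assms(3,4) show ?thesis
    by (intro integrable_mult_of_square_integrable) auto
qed

lemma self_similar_integral_mult:
  assumes "self_similar M X \<beta>" "\<And>t. 0 \<le> t \<Longrightarrow> X t \<in> borel_measurable M" "0 < a" "a \<le> b"
  shows "integral\<^sup>L M (\<lambda>\<omega>. X a \<omega> * X b \<omega>) = a powr (2*\<beta>) * cov_phi M X (b/a)"
proof -
  define I where "I = {1, b/a}"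
  define g where "g f = f 1 * f (b/a)" for f :: "real \<Rightarrow> real"
  have I: "finite I" "I \<subseteq> {0..}" "1 \<in> I" "b/a \<in> I" using assms by (auto simp: I_def)
  have g: "g \<in> borel_measurable (Pi\<^sub>M I (\<lambda>_. borel))"
    unfolding g_def using I by (intro borel_measurable_times measurable_component_singleton)
  have scaled: "(\<lambda>\<omega>. \<lambda>t\<in>I. X (a * t) \<omega>) \<in> M \<rightarrow>\<^sub>M Pi\<^sub>M I (\<lambda>_. borel)"
    using I assms by (intro measurable_restrict) auto
  have multiplied: "(\<lambda>\<omega>. \<lambda>t\<in>I. a powr \<beta> * X t \<omega>) \<in> M \<rightarrow>\<^sub>M Pi\<^sub>M I (\<lambda>_. borel)"
    using I assms by (intro measurable_restrict borel_measurable_times) auto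
  have "integral\<^sup>L M (\<lambda>\<omega>. X a \<omega> * X b \<omega>) = integral\<^sup>L M (\<lambda>\<omega>. g (\<lambda>t\<in>I. X (a * t) \<omega>))"
    using assms I by (simp add: g_def)
  also have "\<dots> = integral\<^sup>L (distr M (Pi\<^sub>M I (\<lambda>_. borel)) (\<lambda>\<omega>. \<lambda>t\<in>I. X (a * t) \<omega>)) g"
    by (rule integral_distr[symmetric, OF scaled g])
  also have "\<dots> = integral\<^sup>L (distr M (Pi\<^sub>M I (\<lambda>_. borel)) (\<lambda>\<omega>. \<lambda>t\<in>I. a powr \<beta> * X t \<omega>)) g"
    using assms(1) I(1,2) \<open>0 < a\<close> unfolding self_similar_def by simp
  also have "\<dots> = integral\<^sup>L M (\<lambda>\<omega>. g (\<lambda>t\<in>I. a powr \<beta> * X t \<omega>))"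
    by (rule integral_distr[OF multiplied g])
  also have "\<dots> = a powr (2*\<beta>) * cov_phi M X (b/a)"
  proof -
    have "a powr (2*\<beta>) = a powr \<beta> * a powr \<beta>" by (simp flip: powr_add)
    then show ?thesis using I by (simp add: g_def cov_phi_def mult_ac)
  qed
  finally show ?thesis .
qed

lemma integral_increments_eq_second_diff:
  assumes "prob_space M" "gaussian_process M X" "self_similar M X \<beta>" "0 < s" "0 < t"
  shows "integral\<^sup>L M (\<lambda>\<omega>. (X (t + 1) \<omega> - X t \<omega>) * (X (s + 1) \<omega> - X s \<omega>))
    = second_diff (ss_kernel (cov_phi M X) \<beta>) s t"
proof -
  have meas: "\<And>t. 0 \<le> t \<Longrightarrow> X t \<in> borel_measurable M"
    using assms(2) by (simp add: gaussian_process_def)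
  have cov: "integral\<^sup>L M (\<lambda>\<omega>. X a \<omega> * X b \<omega>) = ss_kernel (cov_phi M X) \<beta> a b" if "0 < a" "0 < b" for a b
  proof (cases "a \<le> b")
    case True
    then show ?thesis using self_similar_integral_mult[OF assms(3) meas that(1)] by (simp add: ss_kernel_le)
  next
    case False
    then show ?thesis using self_similar_integral_mult[OF assms(3) meas that(2), of a]
      by (simp add: ss_kernel_ge mult.commute)
  qed
  have int: "integrable M (\<lambda>\<omega>. X u \<omega> * X v \<omega>)" if "0 \<le> u" "0 \<le> v" for u v
    using gaussian_process_integrable_mult[OF assms(1,2) that] .
  have i1: "integrable M (\<lambda>\<omega>. X (t+1) \<omega> * X (s+1) \<omega>)"
    and i2: "integrable M (\<lambda>\<omega>. X (t+1) \<omega> * X s \<omega>)"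
    and i3: "integrable M (\<lambda>\<omega>. X t \<omega> * X (s+1) \<omega>)"
    and i4: "integrable M (\<lambda>\<omega>. X t \<omega> * X s \<omega>)"
    using assms(4,5) by (auto intro: int)
  have "(\<lambda>\<omega>. (X (t + 1) \<omega> - X t \<omega>) * (X (s + 1) \<omega> - X s \<omega>))
      = (\<lambda>\<omega>. (X (t+1) \<omega> * X (s+1) \<omega> - X (t+1) \<omega> * X s \<omega>) - X t \<omega> * X (s+1) \<omega> + X t \<omega> * X s \<omega>)"
    by (simp add: algebra_simps)
  then have "integral\<^sup>L M (\<lambda>\<omega>. (X (t + 1) \<omega> - X t \<omega>) * (X (s + 1) \<omega> - X s \<omega>))
      = integral\<^sup>L M (\<lambda>\<omega>. X (t+1) \<omega> * X (s+1) \<omega>) - integral\<^sup>L M (\<lambda>\<omega>. X (t+1) \<omega> * X s \<omega>)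
        - integral\<^sup>L M (\<lambda>\<omega>. X t \<omega> * X (s+1) \<omega>) + integral\<^sup>L M (\<lambda>\<omega>. X t \<omega> * X s \<omega>)"
    using i1 i2 i3 i4 by (simp only: Bochner_Integration.integral_add Bochner_Integration.integral_diff
        Bochner_Integration.integrable_diff)
  then show ?thesis using assms(4,5) by (simp add: second_diff_def cov)
qed

lemma H1_has_derivatives:
  assumes "H1 M X \<beta> \<alpha> lam \<psi>" "1 \<le> x"
  shows "(\<psi> has_real_derivative deriv \<psi> x) (at x)"
    "(deriv \<psi> has_real_derivative deriv (deriv \<psi>) x) (at x)"
proof -
  obtain U where "{1..} \<subseteq> U" "\<And>x. x \<in> U \<Longrightarrow> \<psi> differentiable (at x) \<and> deriv \<psi> differentiable (at x)"
    using assms(1) unfolding H1_def by blast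
  then have "\<psi> differentiable (at x)" "deriv \<psi> differentiable (at x)" using assms(2) by auto
  then show "(\<psi> has_real_derivative deriv \<psi> x) (at x)"
    "(deriv \<psi> has_real_derivative deriv (deriv \<psi>) x) (at x)"
    by (simp_all add: DERIV_deriv_iff_real_differentiable)
qed

lemma H1_regular_part:
  assumes "H1 M X \<beta> \<alpha> lam \<psi>" "0 < \<beta>" "\<beta> < 1"
  obtains C where "regular_part \<psi> (deriv \<psi>) (deriv (deriv \<psi>)) \<alpha> \<beta> C"
proof -
  have "0 < \<alpha> \<and> \<alpha> \<le> 2 * \<beta> \<and> (1 \<le> \<alpha> \<longrightarrow> deriv \<psi> 1 = \<beta> * \<psi> 1)"
    using assms(1) unfolding H1_def by blast
  moreover obtain C where "0 \<le> C" "\<And>x. 1 < x \<Longrightarrow> \<bar>deriv \<psi> x\<bar> \<le> C * x powr (\<alpha> - 1)"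
    "\<And>x. 1 < x \<Longrightarrow> \<bar>deriv (deriv \<psi>) x\<bar> \<le> C * x powr (-1) * (x - 1) powr (\<alpha> - 1)"
    using assms(1) unfolding H1_def by blast
  ultimately have "regular_part \<psi> (deriv \<psi>) (deriv (deriv \<psi>)) \<alpha> \<beta> C"
    using H1_has_derivatives[OF assms(1)] assms(2,3) by unfold_locales simp_all
  then show ?thesis by (rule that)
qed

lemma H1_continuous_cov_phi:
  assumes "H1 M X \<beta> \<alpha> lam \<psi>"
  shows "continuous_on {1..} (cov_phi M X)"
proof (rule continuous_on_eq)
  have "continuous_on {1..} \<psi>"
    using H1_has_derivatives(1)[OF assms]
    by (intro continuous_at_imp_continuous_on) (auto dest: DERIV_isCont)
  moreover have "0 < \<alpha>" using assms unfolding H1_def by simp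
  ultimately show "continuous_on {1..} (\<lambda>x. - lam * (x - 1) powr \<alpha> + \<psi> x)"
    by (intro continuous_intros continuous_on_powr') auto
  show "- lam * (x - 1) powr \<alpha> + \<psi> x = cov_phi M X x" if "x \<in> {1..}" for x
    using assms that unfolding H1_def by simp
qed

theorem lemma4p2:
  fixes M :: "'a measure" and X :: "real \<Rightarrow> 'a \<Rightarrow> real"
    and \<beta> \<alpha> lam \<eta> M1 M2 :: real and \<psi> :: "real \<Rightarrow> real"
  assumes "prob_space M"
    and "gaussian_process M X" and "centered M X"
    and "0 < \<beta>" and "\<beta> < 1" and "self_similar M X \<beta>"
    and "H1 M X \<beta> \<alpha> lam \<psi>"
    and "\<eta> > 0" and "M1 > 0" and "M2 > 0"
  shows "\<exists>u2 :: real \<Rightarrow> real \<Rightarrow> real. \<exists>C > 0.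
    continuous_on ({0<..} \<times> {0<..}) (\<lambda>(s, t). u2 s t) \<and>
    (\<forall>s t. s > \<eta> \<longrightarrow> t > \<eta> \<longrightarrow> \<eta> \<le> \<bar>s - t\<bar> \<longrightarrow> \<bar>s - t\<bar> \<le> M1 * min s t + M2 \<longrightarrow>
      integral\<^sup>L M (\<lambda>\<omega>. (X (t + 1) \<omega> - X t \<omega>) * (X (s + 1) \<omega> - X s \<omega>))
        = lam * (min s t) powr (2 * \<beta> - \<alpha>) * (2 * a_alpha \<alpha> (s - t) + u2 s t) \<and>
      (\<bar>s - t\<bar> \<ge> 1 \<longrightarrow>
         \<bar>u2 s t\<bar> \<le> C * ((min s t) powr (-1) * \<bar>s - t\<bar> powr (\<alpha> - 1) + (min s t) powr (\<alpha> - 2))) \<and>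
      (\<bar>s - t\<bar> < 1 \<longrightarrow>
         \<bar>u2 s t\<bar> \<le> C * ((if \<alpha> < 1 then (min s t) powr (\<alpha> - 1) else 0)
                          + (if \<alpha> \<ge> 1 then (min s t) powr (\<alpha> - 2) else 0))))"
proof -
  have lam: "0 < lam" and "0 < \<alpha>"
    and \<phi>: "\<And>x. 1 \<le> x \<Longrightarrow> cov_phi M X x = - lam * (x - 1) powr \<alpha> + \<psi> x"
    using assms(7) unfolding H1_def by simp_all
  obtain C where "regular_part \<psi> (deriv \<psi>) (deriv (deriv \<psi>)) \<alpha> \<beta> C"
    using H1_regular_part assms(4,5,7) by blast
  then obtain K where K: "0 < K"
    "\<And>s t. \<eta> < s \<Longrightarrow> \<eta> < t \<Longrightarrow> \<eta> \<le> \<bar>s - t\<bar> \<Longrightarrow> \<bar>s - t\<bar> \<le> M1 * min s t + M2 \<Longrightarrow>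
      remainder_estimate \<alpha> K (cov_remainder (cov_phi M X) \<beta> \<alpha> lam s t) s t"
    using regular_part.cov_remainder_estimate[OF _ \<phi> lam] assms(8-10) by (metis less_imp_le)
  show ?thesis
  proof (intro exI[of _ "cov_remainder (cov_phi M X) \<beta> \<alpha> lam"] exI[of _ K] conjI allI impI K(1))
    show "continuous_on ({0<..} \<times> {0<..}) (\<lambda>(s, t). cov_remainder (cov_phi M X) \<beta> \<alpha> lam s t)"
      using H1_continuous_cov_phi[OF assms(7)] \<open>0 < \<alpha>\<close> lam by (intro continuous_on_cov_remainder) auto
    fix s t assume st: "\<eta> < s" "\<eta> < t" "\<eta> \<le> \<bar>s - t\<bar>" "\<bar>s - t\<bar> \<le> M1 * min s t + M2"
    show "integral\<^sup>L M (\<lambda>\<omega>. (X (t + 1) \<omega> - X t \<omega>) * (X (s + 1) \<omega> - X s \<omega>))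
        = lam * (min s t) powr (2 * \<beta> - \<alpha>) * (2 * a_alpha \<alpha> (s - t) + cov_remainder (cov_phi M X) \<beta> \<alpha> lam s t)"
      using integral_increments_eq_second_diff[OF assms(1,2,6), of s t]
        second_diff_eq_cov_remainder[of lam s t] assms(8) st lam by simp
    show "\<bar>cov_remainder (cov_phi M X) \<beta> \<alpha> lam s t\<bar>
        \<le> K * ((min s t) powr (-1) * \<bar>s - t\<bar> powr (\<alpha> - 1) + (min s t) powr (\<alpha> - 2))"
      if "\<bar>s - t\<bar> \<ge> 1" using K(2)[OF st] that unfolding remainder_estimate_def by blast
    show "\<bar>cov_remainder (cov_phi M X) \<beta> \<alpha> lam s t\<bar>
        \<le> K * ((if \<alpha> < 1 then (min s t) powr (\<alpha> - 1) else 0) + (if \<alpha> \<ge> 1 then (min s t) powr (\<alpha> - 2) else 0))"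
      if "\<bar>s - t\<bar> < 1" using K(2)[OF st] that unfolding remainder_estimate_def by blast
  qed
qed

end
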